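(* For the deterministic episodic chain environment and the value-IDS agent described in the context, for every time $t$ the $\tau$-information ratio satisfies $\Gamma_{\tau,t}\le\tau/8$, and consequently $$\mathrm{Regret}(T)\le\frac{1}{2}\sqrt{\frac{\tau}{2}T}.$$
   Context: Fix an integer $\tau\ge2$. Actions $\mathcal{A}=\{0,1\}$; observations $\mathcal{O}=\{(0,0),(0,1),0,1,\ldots,2\tau-2\}$. The environment is parameterized by known numbers $r_0,\ldots,r_{\tau-2}\in[0,1)$ and an unknown $r_{\tau-1}\in\{0,1\}$ with prior $\mathbb{P}(r_{\tau-1}=0)=\mathbb{P}(r_{\tau-1}=1)=1/2$. Starting from $O_0=0$, observations evolve deterministically: if $O_t\in\{0,\ldots,\tau-2\}$ then $O_{t+1}=O_t+\tau$ if $A_t=0$ and $O_{t+1}=O_t+1$ if $A_t=1$; if $O_t\in\{(0,0),(0,1)\}$ then $O_{t+1}=\tau$ if $A_t=0$ and $O_{t+1}=1$ if $A_t=1$; if $O_t=\tau-1$ then $O_{t+1}=(0,r_{\tau-1})$; if $O_t\in\{\tau,\ldots,2\tau-3\}$ then $O_{t+1}=O_t+1$; if $O_t=2\tau-2$ then $O_{t+1}=0$. The state is $S_t=0$ if $O_t\in\{(0,0),(0,1)\}$ and $S_t=O_t$ otherwise; episodes have length $\tau$. Rewards: $R_{t+1}=r_{S_t}$ if $S_t\in\{0,\ldots,\tau-2\}$ and $A_t=0$, $R_{t+1}=r_{S_t}$ if $S_t=\tau-1$, and $R_{t+1}=0$ otherwise. $V_*(s)$ and $Q_*(s,a)$ denote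 the optimal value and action value of state $s$ (resp. state-action pair) for the remainder of the current episode, and $\pi_*$ an optimal policy (determined by the environment; it takes one of two possible forms according to $r_{\tau-1}$). The agent's epistemic state $P_t$ records the value of $r_{\tau-1}$ if it has been observed and is null otherwise; the agent state is $X_t=(S_t,P_t)$. Value-IDS: at each time $t$ the agent computes $\nu\in\Delta_{\mathcal{A}}$ (distributions on $\mathcal{A}$) minimizing $$\frac{\mathbb{E}[V_*(S_t)-Q_*(S_t,\tilde{A}_t)\,|\,X_t]^2}{\mathbb{I}(\pi_*(\cdot|S_t);\tilde{A}_t,Q_*(S_t,\tilde{A}_t)\,|\,X_t=X_t)}$$ (with $0/0=0$), where $\tilde{A}_t\sim\nu$ independently, and samples $A_t$ from $\nu$. $\mathbb{H}$ is entropy and $\mathbb{I}$ mutual information. The $\tau$-information ratio is $\Gamma_{\tau,t}=\mathbb{E}[V_*(S_t)-Q_*(S_t,A_t)]^2\big/\big((\mathbb{H}(\pi_*|P_t)-\mathbb{H}(\pi_*|P_{t+\tau}))/\tau\big)$, taken as $0$ when both numerator and denominator vanish. $\mathrm{Regret}(T)=\mathbb{E}[\sum_{t=0}^{T-1}(V_*(S_t)-Q_*(S_t,A_t))]$ under the agent. *)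

theory Defs
  imports "HOL-Probability.Probability"
begin

text \<open>Observations: Rev v stands for the observation (0,v) (v = r_{tau-1}), Pos n for the
  observation n.  Actions are the naturals 0 and 1 (distributions over actions are
  pmfs supported in {0,1}).  The unknown parameter r_{tau-1} is called rl.\<close>

datatype obs = Rev real | Pos nat

definition st :: "obs \<Rightarrow> nat" where
  "st ob = (case ob of Rev _ \<Rightarrow> 0 | Pos n \<Rightarrow> n)"

definition obs_next :: "nat \<Rightarrow> real \<Rightarrow> obs \<Rightarrow> nat \<Rightarrow> obs" where
  "obs_next \<tau> rl ob a =
     (case ob of
        Rev _ \<Rightarrow> (if a = 0 then Pos \<tau> else Pos 1)
      | Pos n \<Rightarrow>
          (if n \<le> \<tau> - 2 then (if a = 0 then Pos (n + \<tau>) else Pos (n + 1))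
           else if n = \<tau> - 1 then Rev rl
           else if n \<le> 2 * \<tau> - 3 then Pos (n + 1)
           else if n = 2 * \<tau> - 2 then Pos 0
           else undefined))"

text \<open>Reward R_{t+1} as a function of state S_t and action A_t.\<close>
definition rwd :: "nat \<Rightarrow> (nat \<Rightarrow> real) \<Rightarrow> real \<Rightarrow> nat \<Rightarrow> nat \<Rightarrow> real" where
  "rwd \<tau> r rl s a =
     (if s \<le> \<tau> - 2 \<and> a = 0 then r s
      else if s = \<tau> - 1 then rl
      else 0)"

fun Qf :: "nat \<Rightarrow> (nat \<Rightarrow> real) \<Rightarrow> real \<Rightarrow> nat \<Rightarrow> nat \<Rightarrow> nat \<Rightarrow> real" where
  "Qf \<tau> r rl 0 s a = 0"
| "Qf \<tau> r rl (Suc k) s a =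
     rwd \<tau> r rl s a
     + max (Qf \<tau> r rl k (st (obs_next \<tau> rl (Pos s) a)) 0)
           (Qf \<tau> r rl k (st (obs_next \<tau> rl (Pos s) a)) 1)"

definition steps_left :: "nat \<Rightarrow> nat \<Rightarrow> nat" where
  "steps_left \<tau> s = (if s \<le> \<tau> - 1 then \<tau> - s else 2 * \<tau> - 1 - s)"

definition Qstar :: "nat \<Rightarrow> (nat \<Rightarrow> real) \<Rightarrow> real \<Rightarrow> nat \<Rightarrow> nat \<Rightarrow> real" where
  "Qstar \<tau> r rl s a = Qf \<tau> r rl (steps_left \<tau> s) s a"

definition Vstar :: "nat \<Rightarrow> (nat \<Rightarrow> real) \<Rightarrow> real \<Rightarrow> nat \<Rightarrow> real" where
  "Vstar \<tau> r rl s = max (Qstar \<tau> r rl s 0) (Qstar \<tau> r rl s 1)"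

definition pistar :: "nat \<Rightarrow> (nat \<Rightarrow> real) \<Rightarrow> real \<Rightarrow> nat \<Rightarrow> nat" where
  "pistar \<tau> r rl s = (if Qstar \<tau> r rl s 1 \<le> Qstar \<tau> r rl s 0 then 0 else 1)"

definition entropy2 :: "'a pmf \<Rightarrow> real" where
  "entropy2 p = - (\<Sum>x\<in>set_pmf p. pmf p x * log 2 (pmf p x))"

definition mutinf2 :: "('a \<times> 'b) pmf \<Rightarrow> real" where
  "mutinf2 J = entropy2 (map_pmf fst J) + entropy2 (map_pmf snd J) - entropy2 J"

definition ratio_e :: "real \<Rightarrow> real \<Rightarrow> ereal" where
  "ratio_e n d = (if d = 0 then (if n = 0 then 0 else \<infinity>) else ereal (n / d))"

text \<open>An agent selection rule sel t x gives the action distribution at time t in agent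
  state x = (S_t, P_t); P_t = None means r_{tau-1} not yet observed.
  proc t is the joint law of (r_{tau-1}, O_t, P_t).\<close>

fun proc :: "nat \<Rightarrow> (nat \<Rightarrow> nat \<times> real option \<Rightarrow> nat pmf) \<Rightarrow> nat
               \<Rightarrow> (real \<times> obs \<times> real option) pmf" where
  "proc \<tau> sel 0 = map_pmf (\<lambda>v. (v, Pos 0, None)) (pmf_of_set {0, 1})"
| "proc \<tau> sel (Suc t) =
     bind_pmf (proc \<tau> sel t)
       (\<lambda>(v, ob, p). map_pmf
          (\<lambda>a. let ob' = obs_next \<tau> v ob a
               in (v, ob', (case ob' of Rev w \<Rightarrow> Some w | Pos _ \<Rightarrow> p)))
          (sel t (st ob, p)))"

definition agent_joint :: "nat \<Rightarrow> (nat \<Rightarrow> nat \<times> real option \<Rightarrow> nat pmf) \<Rightarrow> nat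
                           \<Rightarrow> (real \<times> (nat \<times> real option)) pmf" where
  "agent_joint \<tau> sel t = map_pmf (\<lambda>(v, ob, p). (v, (st ob, p))) (proc \<tau> sel t)"

definition posterior :: "nat \<Rightarrow> (nat \<Rightarrow> nat \<times> real option \<Rightarrow> nat pmf) \<Rightarrow> nat
                         \<Rightarrow> nat \<times> real option \<Rightarrow> real pmf" where
  "posterior \<tau> sel t x = map_pmf fst (cond_pmf (agent_joint \<tau> sel t) {y. snd y = x})"

definition ids_ratio :: "nat \<Rightarrow> (nat \<Rightarrow> real) \<Rightarrow> real pmf \<Rightarrow> nat \<Rightarrow> nat pmf \<Rightarrow> ereal" where
  "ids_ratio \<tau> r \<mu> s \<nu> =
     ratio_e
       ((measure_pmf.expectation (pair_pmf \<mu> \<nu>)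
           (\<lambda>(v, a). Vstar \<tau> r v s - Qstar \<tau> r v s a))\<^sup>2)
       (mutinf2 (bind_pmf \<mu> (\<lambda>v. map_pmf
           (\<lambda>a. (pistar \<tau> r v s, (a, Qstar \<tau> r v s a))) \<nu>)))"

definition action_dist :: "nat pmf \<Rightarrow> bool" where
  "action_dist \<nu> \<longleftrightarrow> set_pmf \<nu> \<subseteq> {0, 1}"

definition is_value_ids :: "nat \<Rightarrow> (nat \<Rightarrow> real) \<Rightarrow> (nat \<Rightarrow> nat \<times> real option \<Rightarrow> nat pmf) \<Rightarrow> bool" where
  "is_value_ids \<tau> r sel \<longleftrightarrow>
     (\<forall>t x. x \<in> snd ` set_pmf (agent_joint \<tau> sel t) \<longrightarrow>
        action_dist (sel t x) \<and>
        (\<forall>\<nu>. action_dist \<nu> \<longrightarrow>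
           ids_ratio \<tau> r (posterior \<tau> sel t x) (fst x) (sel t x)
             \<le> ids_ratio \<tau> r (posterior \<tau> sel t x) (fst x) \<nu>))"

definition exp_regret :: "nat \<Rightarrow> (nat \<Rightarrow> real) \<Rightarrow> (nat \<Rightarrow> nat \<times> real option \<Rightarrow> nat pmf) \<Rightarrow> nat \<Rightarrow> real" where
  "exp_regret \<tau> r sel t =
     measure_pmf.expectation
       (bind_pmf (proc \<tau> sel t) (\<lambda>(v, ob, p). map_pmf (\<lambda>a. (v, st ob, a)) (sel t (st ob, p))))
       (\<lambda>(v, s, a). Vstar \<tau> r v s - Qstar \<tau> r v s a)"

definition regret :: "nat \<Rightarrow> (nat \<Rightarrow> real) \<Rightarrow> (nat \<Rightarrow> nat \<times> real option \<Rightarrow> nat pmf) \<Rightarrow> nat \<Rightarrow> real" where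
  "regret \<tau> r sel T = (\<Sum>t<T. exp_regret \<tau> r sel t)"

text \<open>Conditional entropy H(pi_* | P_t); pi_* is the whole (random) optimal policy.\<close>
definition cond_ent_pistar :: "nat \<Rightarrow> (nat \<Rightarrow> real) \<Rightarrow> (nat \<Rightarrow> nat \<times> real option \<Rightarrow> nat pmf) \<Rightarrow> nat \<Rightarrow> real" where
  "cond_ent_pistar \<tau> r sel t =
     entropy2 (map_pmf (\<lambda>(v, ob, p). (pistar \<tau> r v, p)) (proc \<tau> sel t))
     - entropy2 (map_pmf (\<lambda>(v, ob, p). p) (proc \<tau> sel t))"

definition Gamma_tau :: "nat \<Rightarrow> (nat \<Rightarrow> real) \<Rightarrow> (nat \<Rightarrow> nat \<times> real option \<Rightarrow> nat pmf) \<Rightarrow> nat \<Rightarrow> ereal" where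
  "Gamma_tau \<tau> r sel t =
     ratio_e ((exp_regret \<tau> r sel t)\<^sup>2)
             ((cond_ent_pistar \<tau> r sel t - cond_ent_pistar \<tau> r sel (t + \<tau>)) / real \<tau>)"

end

(* Until r_(tau-1) is revealed the posterior is uniform; afterwards it is a point mass, the
   information ratio is 0/0 and value-IDS plays optimally.  In an unrevealed top-row state with
   exit reward x and best later exit y, continuing with probability q costs expected regret
   ((1-q)(1-x) + q(x-y))/2 and yields q bits about pi_* if x >= y, nothing if x < y.  So
   value-IDS continues with an explicit probability (surely if x < y), and along the top row these
   probabilities multiply to at least reach_lb of the best remaining exit, which in turn bounds
   eight times the squared one-step regret.  Since H(pi_* | P_t) = 1 - P(revealed by t), a
   potential argument bounds the squared expected regret at time t by an eighth of the
   information gained in [t, t + tau], i.e. Gamma <= tau/8; Cauchy-Schwarz and telescoping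
   then give the regret bound. *)

theory Submission
  imports Defs
begin

section \<open>Optimal values of the chain\<close>

lemma Qf_bottom_row_eq_0:
  assumes "\<tau> \<ge> 2" "\<tau> \<le> s" "k + s \<le> 2 * \<tau> - 1"
  shows "Qf \<tau> r v k s a = 0"
  using assms
proof (induction k arbitrary: s a)
  case 0
  then show ?case by simp
next
  case (Suc k)
  have rwd: "rwd \<tau> r v s a = 0" using Suc.prems by (auto simp: rwd_def)
  show ?case
  proof (cases "s \<le> 2 * \<tau> - 3")
    case True
    then have "obs_next \<tau> v (Pos s) b = Pos (s + 1)" for b
      using Suc.prems by (auto simp: obs_next_def)
    then show ?thesis using Suc.prems Suc.IH[of "s + 1"] rwd by (simp add: st_def)
  next
    case False
    then have "k = 0" using Suc.prems by linarith
    then show ?thesis using rwd by simp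
  qed
qed

lemma Qf_action_irrelevant:
  assumes "\<tau> \<ge> 2" "\<tau> - 1 \<le> s"
  shows "Qf \<tau> r v k s a = Qf \<tau> r v k s 0"
proof (cases k)
  case (Suc k')
  have "rwd \<tau> r v s a = rwd \<tau> r v s 0" using assms by (auto simp: rwd_def)
  moreover have "obs_next \<tau> v (Pos s) a = obs_next \<tau> v (Pos s) 0"
    using assms by (auto simp: obs_next_def)
  ultimately show ?thesis using Suc by simp
qed simp

lemma Qstar_eq_Vstar_off_top:
  assumes "\<tau> \<ge> 2" "\<tau> - 1 \<le> s"
  shows "Qstar \<tau> r v s a = Vstar \<tau> r v s"
  using Qf_action_irrelevant[OF assms, of r v _ a] Qf_action_irrelevant[OF assms, of r v _ 1]
  by (simp add: Vstar_def Qstar_def)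

lemma Qstar_exit:
  assumes "\<tau> \<ge> 2" "s \<le> \<tau> - 2"
  shows "Qstar \<tau> r v s 0 = r s"
proof -
  have "steps_left \<tau> s = Suc (\<tau> - s - 1)" using assms by (auto simp: steps_left_def)
  moreover have "obs_next \<tau> v (Pos s) 0 = Pos (s + \<tau>)" using assms by (auto simp: obs_next_def)
  moreover have "Qf \<tau> r v (\<tau> - s - 1) (s + \<tau>) b = 0" for b
    using assms by (intro Qf_bottom_row_eq_0) auto
  ultimately show ?thesis using assms by (simp add: Qstar_def st_def rwd_def)
qed

lemma Qstar_advance:
  assumes "\<tau> \<ge> 2" "s \<le> \<tau> - 2"
  shows "Qstar \<tau> r v s 1 = Vstar \<tau> r v (s + 1)"
proof -
  have "steps_left \<tau> s = Suc (\<tau> - s - 1)" "steps_left \<tau> (s + 1) = \<tau> - s - 1"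
    using assms by (auto simp: steps_left_def)
  moreover have "obs_next \<tau> v (Pos s) 1 = Pos (Suc s)" using assms by (auto simp: obs_next_def)
  moreover have "rwd \<tau> r v s 1 = 0" using assms by (auto simp: rwd_def)
  ultimately show ?thesis by (simp add: Vstar_def Qstar_def st_def)
qed

lemma Qstar_reveal:
  assumes "\<tau> \<ge> 2"
  shows "Qstar \<tau> r v (\<tau> - 1) a = v"
proof -
  have "steps_left \<tau> (\<tau> - 1) = Suc 0" using assms by (auto simp: steps_left_def)
  moreover have "\<not> \<tau> - 1 \<le> \<tau> - 2" using assms by arith
  ultimately show ?thesis by (simp add: Qstar_def rwd_def)
qed

lemma Vstar_reveal: "\<tau> \<ge> 2 \<Longrightarrow> Vstar \<tau> r v (\<tau> - 1) = v"
  using Qstar_reveal[of \<tau> r v 0] Qstar_reveal[of \<tau> r v 1] by (simp add: Vstar_def)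

lemma Qstar_pistar: "Qstar \<tau> r v s (pistar \<tau> r v s) = Vstar \<tau> r v s"
  unfolding pistar_def Vstar_def by auto

lemma pistar_action: "pistar \<tau> r v s \<in> {0, 1}"
  unfolding pistar_def by auto

definition best_exit :: "nat \<Rightarrow> (nat \<Rightarrow> real) \<Rightarrow> nat \<Rightarrow> real" where
  "best_exit \<tau> r s = Max (insert 0 (r ` {s..<\<tau> - 1}))"

lemma best_exit_eq_0: "\<tau> - 1 \<le> s \<Longrightarrow> best_exit \<tau> r s = 0"
  by (simp add: best_exit_def)

lemma best_exit_step:
  assumes "s < \<tau> - 1"
  shows "best_exit \<tau> r s = max (r s) (best_exit \<tau> r (s + 1))"
proof -
  have "{s..<\<tau> - 1} = insert s {s + 1..<\<tau> - 1}" using assms by auto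
  then have "insert 0 (r ` {s..<\<tau> - 1}) = insert (r s) (insert 0 (r ` {s + 1..<\<tau> - 1}))"
    by auto
  then show ?thesis unfolding best_exit_def by (simp del: Max_insert2)
qed

lemma best_exit_bounds:
  assumes "\<forall>k < \<tau> - 1. 0 \<le> r k \<and> r k < 1"
  shows "0 \<le> best_exit \<tau> r s" "best_exit \<tau> r s < 1"
proof -
  have "best_exit \<tau> r s \<in> insert 0 (r ` {s..<\<tau> - 1})"
    unfolding best_exit_def by (rule Max_in) auto
  then show "best_exit \<tau> r s < 1" using assms by auto
  show "0 \<le> best_exit \<tau> r s" unfolding best_exit_def by (simp add: Max_ge)
qed

lemma Vstar_top_row:
  assumes "\<tau> \<ge> 2" and r: "\<forall>k < \<tau> - 1. 0 \<le> r k \<and> r k < 1" and "s \<le> \<tau> - 1"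
  shows "Vstar \<tau> r 1 s = 1 \<and> Vstar \<tau> r 0 s = best_exit \<tau> r s"
  using assms(3)
proof (induction "\<tau> - 1 - s" arbitrary: s)
  case 0
  then have "s = \<tau> - 1" by simp
  then show ?case
    using assms Vstar_reveal[of \<tau> r 1] Vstar_reveal[of \<tau> r 0] by (simp add: best_exit_eq_0)
next
  case (Suc d)
  then have s: "s \<le> \<tau> - 2" "s < \<tau> - 1" by auto
  have IH: "Vstar \<tau> r 1 (s + 1) = 1 \<and> Vstar \<tau> r 0 (s + 1) = best_exit \<tau> r (s + 1)"
    using Suc by (intro Suc.hyps) auto
  have "0 \<le> r s" "r s < 1" using r s by auto
  then show ?case
    using IH Qstar_advance[OF assms(1) s(1), of r 1] Qstar_advance[OF assms(1) s(1), of r 0]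
    unfolding Vstar_def by (simp add: Qstar_exit[OF assms(1) s(1)] best_exit_step[OF s(2)] Vstar_def)
qed

section \<open>The one-state value-IDS problem\<close>

text \<open>In an unrevealed top-row state with exit reward \<open>x\<close> and best later exit \<open>y \<le> x\<close>, an
  agent continuing with probability \<open>q\<close> has expected regret \<^term>\<open>ids_regret x y q\<close> under
  the uniform prior and gains \<open>q\<close> bits about \<open>\<pi>\<^sub>*\<close>; \<^term>\<open>ids_prob x y\<close> minimises
  the value-IDS ratio \<open>ids_regret\<^sup>2 / q\<close>.\<close>

definition ids_regret :: "real \<Rightarrow> real \<Rightarrow> real \<Rightarrow> real" where
  "ids_regret x y q = ((1 - q) * (1 - x) + q * (x - y)) / 2"

definition ids_prob :: "real \<Rightarrow> real \<Rightarrow> real" where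
  "ids_prob x y = (if 2 * (1 - x) < x - y then (1 - x) / (2 * x - y - 1) else 1)"

text \<open>\<^term>\<open>reach_lb (best_exit \<tau> r s)\<close> will bound from below the probability that the
  unrevealed value-IDS agent walks from \<open>s\<close> to the end of the top row.\<close>

definition reach_lb :: "real \<Rightarrow> real" where
  "reach_lb x = (if x \<le> 2/3 then 1 else (1 - x) / (2 * x - 1))"

lemma ids_prob_bounds: "0 \<le> y \<Longrightarrow> y \<le> x \<Longrightarrow> x < 1 \<Longrightarrow> 0 < ids_prob x y \<and> ids_prob x y \<le> 1"
  unfolding ids_prob_def by (auto simp: field_simps)

lemma amgm_eq_of_le:
  fixes a c q :: real
  assumes "0 < q" "(a + q * c)\<^sup>2 / (4 * q) \<le> a * c"
  shows "a = q * c"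
proof -
  have "(a - q * c)\<^sup>2 \<le> 0"
    using assms by (simp add: field_simps power2_eq_square algebra_simps)
  then show ?thesis by simp
qed

lemma div_sq_gt_of_lt_1:
  fixes a c q :: real
  assumes "0 < a" "\<bar>c\<bar> \<le> a" "0 < q" "q < 1"
  shows "(a + c)\<^sup>2 / 4 < (a + q * c)\<^sup>2 / (4 * q)"
proof -
  have "q * c\<^sup>2 < a\<^sup>2"
  proof (cases "c = 0")
    case False
    then have "q * c\<^sup>2 < 1 * c\<^sup>2" using assms(4) by (intro mult_strict_right_mono) auto
    moreover have "c\<^sup>2 \<le> a\<^sup>2" using abs_le_square_iff[of c a] assms(1,2) by simp
    ultimately show ?thesis by simp
  qed (use assms(1) in simp)
  then have "0 < (1 - q) * (a\<^sup>2 - q * c\<^sup>2)" using assms(4) by (intro mult_pos_pos) auto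
  then have "q * (a + c)\<^sup>2 < (a + q * c)\<^sup>2" by (simp add: power2_eq_square algebra_simps)
  then show ?thesis using assms(3) by (simp add: field_simps)
qed

lemma ids_prob_unique_minimiser:
  assumes "0 \<le> y" "y \<le> x" "x < 1" "0 < q" "q \<le> 1"
    and le: "(ids_regret x y q)\<^sup>2 / q \<le> (ids_regret x y (ids_prob x y))\<^sup>2 / ids_prob x y"
  shows "q = ids_prob x y"
proof -
  define a where "a = 1 - x"
  define c where "c = 2 * x - y - 1"
  have a0: "a > 0" using assms a_def by auto
  have reg: "ids_regret x y p = (a + p * c) / 2" for p
    unfolding ids_regret_def a_def c_def by (simp add: field_simps)
  show ?thesis
  proof (cases "2 * (1 - x) < x - y")
    case True
    then have ca: "c > a" using a_def c_def by auto
    have p: "ids_prob x y = a / c" using True unfolding ids_prob_def a_def c_def by simp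
    have "(a + q * c)\<^sup>2 / (4 * q) \<le> a * c"
      using le a0 ca unfolding reg p by (simp add: power_divide power2_eq_square field_simps)
    then have "a = q * c" by (rule amgm_eq_of_le[OF assms(4)])
    then show ?thesis using p ca a0 by (simp add: field_simps)
  next
    case False
    then have "\<bar>c\<bar> \<le> a" using assms a_def c_def by auto
    have p: "ids_prob x y = 1" using False unfolding ids_prob_def by simp
    have "(a + q * c)\<^sup>2 / (4 * q) \<le> (a + c)\<^sup>2 / 4" using le unfolding reg p by (simp add: power_divide)
    then show ?thesis
      using div_sq_gt_of_lt_1[OF a0 \<open>\<bar>c\<bar> \<le> a\<close> assms(4)] assms(5) p by force
  qed
qed

lemma reach_lb_antimono:
  assumes "y \<le> x" "x < 1"
  shows "reach_lb x \<le> reach_lb y"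
proof (cases "y \<le> 2/3")
  case False
  then have "2 * y - 1 > 0" "2 * x - 1 > 0" using assms by auto
  moreover have "(1 - x) * (2 * y - 1) \<le> (1 - y) * (2 * x - 1)" using assms by (simp add: algebra_simps)
  ultimately show ?thesis using False assms unfolding reach_lb_def by (simp add: divide_simps)
qed (use assms in \<open>auto simp: reach_lb_def field_simps\<close>)

lemma reach_lb_le_ids_prob_mult:
  assumes "0 \<le> y" "y \<le> x" "x < 1"
  shows "reach_lb x \<le> ids_prob x y * reach_lb y"
proof (cases "2 * (1 - x) < x - y \<and> 2/3 < x")
  case False
  then consider "ids_prob x y = 1" | "x \<le> 2/3" unfolding ids_prob_def by auto
  then show ?thesis
  proof cases
    case 1
    then show ?thesis using reach_lb_antimono[OF assms(2,3)] by simp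
  next
    case 2
    then show ?thesis using assms unfolding reach_lb_def ids_prob_def by auto
  qed
next
  case True
  then have x: "2/3 < x" and d1: "2 * x - 1 > 0" and d3: "2 * x - y - 1 > 0" using assms by auto
  have p: "ids_prob x y = (1 - x) / (2 * x - y - 1)" using True unfolding ids_prob_def by simp
  show ?thesis
  proof (cases "y \<le> 2/3")
    case True
    have "(1 - x) / (2 * x - 1) \<le> (1 - x) / (2 * x - y - 1)"
      using d1 d3 assms by (intro divide_left_mono) auto
    then show ?thesis using p x True unfolding reach_lb_def by simp
  next
    case False
    then have d2: "2 * y - 1 > 0" by simp
    have "2 * x - 1 - 3 * x * y + y + y\<^sup>2 = (1 - y)\<^sup>2 + (1 - x) * (3 * y - 2)"
      by (simp add: power2_eq_square algebra_simps)
    moreover have "(1 - x) * (3 * y - 2) \<ge> 0" using assms False by simp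
    ultimately have "2 * x - 1 - 3 * x * y + y + y\<^sup>2 \<ge> 0" by simp
    then have "(2 * x - y - 1) * (2 * y - 1) \<le> (1 - y) * (2 * x - 1)"
      by (simp add: power2_eq_square algebra_simps)
    then have "(1 - x) * ((2 * x - y - 1) * (2 * y - 1)) \<le> (1 - x) * ((1 - y) * (2 * x - 1))"
      using assms by (intro mult_left_mono) auto
    then have "(1 - x) / (2 * x - 1) \<le> (1 - x) / (2 * x - y - 1) * ((1 - y) / (2 * y - 1))"
      using d1 d2 d3 by (simp add: divide_simps mult.commute mult.left_commute)
    then show ?thesis using p x False unfolding reach_lb_def by simp
  qed
qed

lemma mult_one_minus_le_eighth: "(1 - y) * (2 * y - 1) \<le> (1/8 :: real)"
proof -
  have "1/8 - (1 - y) * (2 * y - 1) = 2 * (y - 3/4)\<^sup>2" by (simp add: power2_eq_square algebra_simps)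
  then show ?thesis by (smt (verit) zero_le_power2)
qed

lemma square_le_reach_lb:
  assumes "0 \<le> y" "y < 1"
  shows "(1 - y)\<^sup>2 \<le> reach_lb y"
proof (cases "y \<le> 2/3")
  case True
  have "(1 - y)\<^sup>2 \<le> 1\<^sup>2" using assms by (intro power_mono) auto
  then show ?thesis using True unfolding reach_lb_def by simp
next
  case False
  then have "2 * y - 1 > 0" by simp
  moreover have "(1 - y) * ((1 - y) * (2 * y - 1)) \<le> (1 - y) * 1"
    using assms mult_one_minus_le_eighth[of y] by (intro mult_left_mono) auto
  ultimately have "(1 - y)\<^sup>2 \<le> (1 - y) / (2 * y - 1)" by (simp add: field_simps power2_eq_square)
  then show ?thesis using False unfolding reach_lb_def by simp
qed

lemma ids_regret_sq_le:
  assumes "0 \<le> y" "y \<le> x" "x < 1"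
  shows "(ids_regret x y (ids_prob x y))\<^sup>2 \<le> ids_prob x y * reach_lb y / 8"
proof (cases "2 * (1 - x) < x - y")
  case False
  then have p: "ids_prob x y = 1" unfolding ids_prob_def by simp
  have "(x - y)\<^sup>2 \<le> (2 * (1 - y) / 3)\<^sup>2" using False assms by (intro power_mono) auto
  also have "\<dots> = 4 * (1 - y)\<^sup>2 / 9" by (simp add: power2_eq_square algebra_simps)
  also have "\<dots> \<le> (1 - y)\<^sup>2 / 2" by simp
  also have "\<dots> \<le> reach_lb y / 2" using square_le_reach_lb[of y] assms by simp
  finally show ?thesis unfolding p ids_regret_def by (simp add: power_divide)
next
  case True
  define a where "a = 1 - x"
  define c where "c = 2 * x - y - 1"
  have a0: "a > 0" and ca: "c > a" using True assms a_def c_def by auto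
  have p: "ids_prob x y = a / c" using True unfolding ids_prob_def a_def c_def by simp
  have xy: "x - y = c + a" "1 - x = a" using a_def c_def by auto
  have rp: "ids_regret x y (a / c) = a"
    unfolding ids_regret_def xy using ca a0 by (simp add: field_simps)
  have "(1 - y)\<^sup>2 - 8 * (a * c) = (2 * a - c)\<^sup>2"
    unfolding a_def c_def by (simp add: power2_eq_square algebra_simps)
  then have "8 * (a * c) \<le> reach_lb y"
    using square_le_reach_lb[of y] assms by (smt (verit) zero_le_power2)
  then have "a\<^sup>2 \<le> a / c * reach_lb y / 8" using a0 ca by (simp add: field_simps power2_eq_square)
  then show ?thesis unfolding p rp .
qed

lemma expectation_mono_finite:
  assumes "finite (set_pmf p)" "\<And>x. x \<in> set_pmf p \<Longrightarrow> f x \<le> g x"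
  shows "measure_pmf.expectation p f \<le> measure_pmf.expectation p (g :: _ \<Rightarrow> real)"
  using assms by (intro integral_mono_AE) (auto simp: integrable_measure_pmf_finite AE_measure_pmf_iff)

lemma expectation_add_finite:
  assumes "finite (set_pmf p)"
  shows "measure_pmf.expectation p (\<lambda>x. f x + g x)
           = measure_pmf.expectation p f + measure_pmf.expectation p (g :: _ \<Rightarrow> real)"
  using assms by (intro Bochner_Integration.integral_add) (auto simp: integrable_measure_pmf_finite)

lemma expectation_cong_set_pmf:
  "(\<And>x. x \<in> set_pmf p \<Longrightarrow> f x = g x) \<Longrightarrow>
     measure_pmf.expectation p f = measure_pmf.expectation p (g :: _ \<Rightarrow> real)"
  by (intro integral_cong_AE) (auto simp: AE_measure_pmf_iff)

lemma square_expectation_le_finite: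
  assumes "finite (set_pmf p)"
  shows "(measure_pmf.expectation p f)\<^sup>2 \<le> measure_pmf.expectation p (\<lambda>x. (f x)\<^sup>2 :: real)"
proof -
  have "0 \<le> measure_pmf.variance p f" by (rule measure_pmf.variance_positive)
  also have "\<dots> = measure_pmf.expectation p (\<lambda>x. (f x)\<^sup>2) - (measure_pmf.expectation p f)\<^sup>2"
    using assms by (intro measure_pmf.variance_eq) (auto simp: integrable_measure_pmf_finite)
  finally show ?thesis by simp
qed

lemma expectation_bind_pmf_finite:
  assumes fin: "finite (set_pmf p)" and fin2: "\<And>x. x \<in> set_pmf p \<Longrightarrow> finite (set_pmf (g x))"
  shows "measure_pmf.expectation (bind_pmf p g) (f :: _ \<Rightarrow> real)
           = measure_pmf.expectation p (\<lambda>x. measure_pmf.expectation (g x) f)"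
proof -
  define S where "S = set_pmf p"
  define B where "B = (\<Union>x\<in>S. set_pmf (g x))"
  have fS: "finite S" and fB: "finite B" using fin fin2 unfolding S_def B_def by auto
  have "measure_pmf.expectation (bind_pmf p g) f = (\<Sum>y\<in>B. f y * pmf (bind_pmf p g) y)"
    using fB by (intro integral_measure_pmf_real) (auto simp: B_def S_def)
  also have "\<dots> = (\<Sum>y\<in>B. f y * (\<Sum>x\<in>S. pmf (g x) y * pmf p x))"
    unfolding pmf_bind using fS
    by (intro sum.cong refl arg_cong2[where f="(*)"] integral_measure_pmf_real) (auto simp: S_def)
  also have "\<dots> = (\<Sum>x\<in>S. (\<Sum>y\<in>B. f y * pmf (g x) y) * pmf p x)"
    by (simp add: sum_distrib_left sum_distrib_right mult.assoc mult.commute mult.left_commute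
        sum.swap[of _ B])
  also have "\<dots> = (\<Sum>x\<in>S. measure_pmf.expectation (g x) f * pmf p x)"
    using fB by (intro sum.cong refl arg_cong2[where f="(*)"] integral_measure_pmf_real[symmetric])
      (auto simp: B_def)
  also have "\<dots> = measure_pmf.expectation p (\<lambda>x. measure_pmf.expectation (g x) f)"
    using fS by (intro integral_measure_pmf_real[symmetric]) (auto simp: S_def)
  finally show ?thesis .
qed

lemma pmf_map_finite_support:
  assumes "finite S" "set_pmf M \<subseteq> S"
  shows "pmf (map_pmf f M) z = (\<Sum>x\<in>{x\<in>S. f x = z}. pmf M x)"
proof -
  have "f -` {z} \<inter> set_pmf M = {x\<in>S. f x = z} \<inter> set_pmf M" using assms(2) by auto
  then have "measure_pmf.prob M (f -` {z}) = measure_pmf.prob M {x\<in>S. f x = z}"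
    by (metis measure_Int_set_pmf)
  then show ?thesis using assms(1) by (simp add: pmf_map measure_measure_pmf_finite)
qed

lemma pmf_map_if_None:
  "pmf (map_pmf (\<lambda>z. if z = None then Some v else None) M) y
     = (if y = Some v then pmf M None else if y = None then 1 - pmf M None else 0)"
proof -
  have preimage: "(\<lambda>z. if z = None then Some v else None) -` {y}
      = (if y = Some v then {None} else if y = None then UNIV - {None} else {})"
    by (auto split: if_splits)
  show ?thesis
    unfolding pmf_map preimage using measure_pmf.prob_compl[of "{None}" M] by (simp add: measure_pmf_single)
qed

lemma entropy2_eq_sum:
  assumes "finite A" "set_pmf p \<subseteq> A"
  shows "entropy2 p = - (\<Sum>x\<in>A. pmf p x * log 2 (pmf p x))"
proof -
  have "(\<Sum>x\<in>set_pmf p. pmf p x * log 2 (pmf p x)) = (\<Sum>x\<in>A. pmf p x * log 2 (pmf p x))"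
    using assms by (intro sum.mono_neutral_left) (auto simp: set_pmf_eq)
  then show ?thesis unfolding entropy2_def by simp
qed

lemma entropy2_map_inj:
  assumes "inj_on f (set_pmf p)"
  shows "entropy2 (map_pmf f p) = entropy2 p"
proof -
  have "(\<Sum>x\<in>f ` set_pmf p. pmf (map_pmf f p) x * log 2 (pmf (map_pmf f p) x))
      = (\<Sum>x\<in>set_pmf p. pmf (map_pmf f p) (f x) * log 2 (pmf (map_pmf f p) (f x)))"
    using sum.reindex[OF assms] by (simp add: comp_def)
  also have "\<dots> = (\<Sum>x\<in>set_pmf p. pmf p x * log 2 (pmf p x))"
    using assms by (intro sum.cong) (auto simp: pmf_map_inj)
  finally show ?thesis unfolding entropy2_def by simp
qed

lemma mutinf2_const_fst: "mutinf2 (map_pmf (\<lambda>z. (c, z)) M) = 0"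
proof -
  have "entropy2 (map_pmf (\<lambda>z. (c, z)) M) = entropy2 M"
    by (rule entropy2_map_inj) (auto simp: inj_on_def)
  then show ?thesis by (simp add: mutinf2_def map_pmf_comp entropy2_def)
qed

lemma mult_log2_half: "0 \<le> x \<Longrightarrow> x * log 2 (x / 2) = x * log 2 x - (x :: real)"
  by (cases "x = 0") (auto simp: log_divide right_diff_distrib)

text \<open>A uniform bit sent through an erasure channel with erasure probability \<open>1 - q\<close>: the
  output \<open>e\<close> means erased, the outputs \<open>d\<close>, \<open>d'\<close> identify the input.\<close>

lemma entropy2_erasure_channel:
  fixes J :: "('a \<times> 'b) pmf"
  assumes supp: "set_pmf J \<subseteq> {(a, e), (b, e), (a, d), (b, d')}"
    and ne: "a \<noteq> b" "d \<noteq> e" "d' \<noteq> e" "d \<noteq> d'"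
    and ae: "pmf J (a, e) = (1 - q) / 2" and be: "pmf J (b, e) = (1 - q) / 2"
    and ad: "pmf J (a, d) = q / 2" and bd: "pmf J (b, d') = q / 2"
  shows "entropy2 (map_pmf fst J) = 1" "entropy2 J - entropy2 (map_pmf snd J) = 1 - q"
proof -
  have q: "0 \<le> q" "q \<le> 1" using pmf_nonneg[of J "(a, d)"] pmf_nonneg[of J "(a, e)"] ae ad by auto
  let ?S = "{(a, e), (b, e), (a, d), (b, d')}"
  have "{x\<in>?S. fst x = a} = {(a, e), (a, d)}" "{x\<in>?S. fst x = b} = {(b, e), (b, d')}"
    using ne by auto
  then have pfst: "pmf (map_pmf fst J) a = 1/2" "pmf (map_pmf fst J) b = 1/2"
    using ne ae be ad bd by (simp_all add: pmf_map_finite_support[OF _ supp])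
  have "entropy2 (map_pmf fst J) = - (\<Sum>x\<in>{a, b}. pmf (map_pmf fst J) x * log 2 (pmf (map_pmf fst J) x))"
    using supp by (intro entropy2_eq_sum) auto
  then show "entropy2 (map_pmf fst J) = 1" using ne by (simp add: pfst log_divide)
  have "{x\<in>?S. snd x = e} = {(a, e), (b, e)}" "{x\<in>?S. snd x = d} = {(a, d)}"
    "{x\<in>?S. snd x = d'} = {(b, d')}"
    using ne by auto
  then have psnd: "pmf (map_pmf snd J) e = 1 - q" "pmf (map_pmf snd J) d = q / 2"
    "pmf (map_pmf snd J) d' = q / 2"
    using ne ae be ad bd by (simp_all add: pmf_map_finite_support[OF _ supp])
  have "entropy2 J = - (\<Sum>x\<in>?S. pmf J x * log 2 (pmf J x))"
    using supp by (intro entropy2_eq_sum) auto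
  also have "\<dots> = - ((1 - q) * log 2 ((1 - q) / 2) + q * log 2 (q / 2))"
    using ne by (simp add: ae be ad bd)
  finally have HJ: "entropy2 J = - ((1 - q) * log 2 ((1 - q) / 2) + q * log 2 (q / 2))" .
  have "entropy2 (map_pmf snd J)
      = - (\<Sum>x\<in>{e, d, d'}. pmf (map_pmf snd J) x * log 2 (pmf (map_pmf snd J) x))"
    using supp by (intro entropy2_eq_sum) auto
  also have "\<dots> = - ((1 - q) * log 2 (1 - q) + q * log 2 (q / 2))"
    using ne by (simp add: psnd)
  finally show "entropy2 J - entropy2 (map_pmf snd J) = 1 - q"
    using HJ mult_log2_half[of "1 - q"] q by simp
qed

corollary mutinf2_erasure_channel:
  assumes "set_pmf J \<subseteq> {(a, e), (b, e), (a, d), (b, d')}"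
    and "a \<noteq> b" "d \<noteq> e" "d' \<noteq> e" "d \<noteq> d'"
    and "pmf J (a, e) = (1 - q) / 2" "pmf J (b, e) = (1 - q) / 2"
    and "pmf J (a, d) = q / 2" "pmf J (b, d') = q / 2"
  shows "mutinf2 J = q"
  using entropy2_erasure_channel[OF assms] by (simp add: mutinf2_def)

lemma sum_diff_shift:
  fixes w :: "nat \<Rightarrow> 'a :: ab_group_add"
  shows "(\<Sum>t<T. w t - w (t + k)) = (\<Sum>j<k. w j - w (T + j))"
proof (induction T)
  case (Suc T)
  have "(\<Sum>j<k. w (T + j) - w (Suc T + j)) = w T - w (T + k)"
    using sum_lessThan_telescope'[of "\<lambda>j. w (T + j)" k] by simp
  moreover have "(\<Sum>j<k. w j - w (Suc T + j))
      = (\<Sum>j<k. w j - w (T + j)) + (\<Sum>j<k. w (T + j) - w (Suc T + j))"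
    by (simp add: sum.distrib[symmetric])
  ultimately show ?case using Suc by (simp add: add.commute)
qed simp

lemma sum_le_sqrt_of_sq_le:
  fixes e d :: "nat \<Rightarrow> real"
  assumes sq: "\<And>t. (e t)\<^sup>2 \<le> c * d t" and "0 \<le> c" and "(\<Sum>t<T. d t) \<le> D"
  shows "(\<Sum>t<T. e t) \<le> sqrt (c * D * T)"
proof -
  have "e t \<le> sqrt (c * d t)" for t
    using real_sqrt_le_mono[OF sq[of t]] real_sqrt_abs[of "e t"] by linarith
  then have "(\<Sum>t<T. e t) \<le> (\<Sum>t<T. 1 * sqrt (c * d t))" by (simp add: sum_mono)
  also have "\<dots> \<le> sqrt ((\<Sum>t<T. 1\<^sup>2) * (\<Sum>t<T. (sqrt (c * d t))\<^sup>2))"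
    by (rule real_le_rsqrt[OF Cauchy_Schwarz_ineq_sum])
  also have "(\<Sum>t<T. (sqrt (c * d t))\<^sup>2) = c * (\<Sum>t<T. d t)"
    using order_trans[OF zero_le_power2 sq] by (simp add: sum_distrib_left)
  also have "sqrt ((\<Sum>t<T. 1\<^sup>2) * (c * (\<Sum>t<T. d t))) \<le> sqrt (c * D * T)"
    using mult_left_mono[OF assms(3,2)] by (simp add: mult_left_mono mult.commute)
  finally show ?thesis .
qed

abbreviation prior :: "real pmf" where
  "prior \<equiv> pmf_of_set {0, 1}"

lemma pmf_bind_prior: "pmf (bind_pmf prior f) z = (pmf (f 0) z + pmf (f 1) z) / 2"
  by (subst pmf_bind_pmf_of_set) auto

lemma expectation_prior: "measure_pmf.expectation prior (f :: real \<Rightarrow> real) = (f 0 + f 1) / 2"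
  by (subst integral_pmf_of_set) auto

lemma pmf_pair_const_fst:
  "pmf (map_pmf (\<lambda>z. (v, g z)) M) (v', w) = (if v = v' then pmf (map_pmf g M) w else 0)"
proof (cases "v = v'")
  case True
  have "map_pmf (\<lambda>z. (v, g z)) M = map_pmf (Pair v) (map_pmf g M)" by (simp add: map_pmf_comp)
  moreover have "pmf (map_pmf (Pair v) (map_pmf g M)) (Pair v w) = pmf (map_pmf g M) w"
    by (rule pmf_map_inj') (auto simp: inj_def)
  ultimately show ?thesis using True by simp
next
  case False
  then have "(v', w) \<notin> set_pmf (map_pmf (\<lambda>z. (v, g z)) M)" by auto
  then show ?thesis using False by (simp add: set_pmf_eq)
qed

lemma finite_set_pmf_action: "action_dist \<nu> \<Longrightarrow> finite (set_pmf \<nu>)"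
  unfolding action_dist_def using finite_subset by blast

lemma pmf_action_0: "action_dist \<nu> \<Longrightarrow> pmf \<nu> 0 = 1 - pmf \<nu> 1"
  using sum_pmf_eq_1[of "{0, 1 :: nat}" \<nu>] unfolding action_dist_def by simp

lemma expectation_action:
  "action_dist \<nu> \<Longrightarrow> measure_pmf.expectation \<nu> f = (1 - pmf \<nu> 1) * f 0 + pmf \<nu> 1 * f 1"
  by (subst integral_measure_pmf_real[of "{0, 1}"]) (auto simp: action_dist_def pmf_action_0)

lemma pmf_map_action:
  assumes "action_dist \<nu>"
  shows "pmf (map_pmf g \<nu>) z
           = (if g 0 = z then 1 - pmf \<nu> 1 else 0) + (if g 1 = z then pmf \<nu> 1 else 0)"
proof -
  have "(\<lambda>a. indicator {z} (g a) :: real) = indicator (g -` {z})" by (auto simp: indicator_def)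
  then have "pmf (map_pmf g \<nu>) z = measure_pmf.expectation \<nu> (\<lambda>a. indicator {z} (g a))"
    by (simp add: pmf_map)
  then show ?thesis using expectation_action[OF assms] by (simp add: indicator_def)
qed

lemma expectation_pair_prior_action:
  assumes "action_dist \<nu>"
  shows "measure_pmf.expectation (pair_pmf prior \<nu>) h =
    ((1 - pmf \<nu> 1) * (h (0, 0) + h (1, 0)) + pmf \<nu> 1 * (h (0, 1) + h (1, 1))) / 2"
proof -
  have "set_pmf (pair_pmf prior \<nu>) \<subseteq> {(0, 0), (0, 1), (1, 0), (1, 1)}"
    using assms by (auto simp: set_pair_pmf action_dist_def)
  then have "measure_pmf.expectation (pair_pmf prior \<nu>) h
      = (\<Sum>x\<in>{(0, 0), (0, 1), (1, 0), (1, 1)}. h x * pmf (pair_pmf prior \<nu>) x)"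
    by (intro integral_measure_pmf_real) auto
  then show ?thesis using pmf_action_0[OF assms] by (simp add: pmf_pair field_simps)
qed

lemma action_dist_bernoulli:
  assumes "0 \<le> p" "p \<le> 1"
  defines "\<nu> \<equiv> map_pmf (\<lambda>b. if b then 1 else 0) (bernoulli_pmf p)"
  shows "action_dist \<nu>" "pmf \<nu> 1 = p"
proof -
  show "action_dist \<nu>" unfolding \<nu>_def action_dist_def by auto
  have "pmf \<nu> ((\<lambda>b. if b then 1 else 0) True) = pmf (bernoulli_pmf p) True"
    unfolding \<nu>_def by (rule pmf_map_inj') (auto simp: inj_def split: if_splits)
  then show "pmf \<nu> 1 = p" using assms by simp
qed

lemma ratio_e_le_0_iff: "ratio_e n 0 \<le> 0 \<longleftrightarrow> n = 0"
  unfolding ratio_e_def by auto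

lemma ratio_e_zero_left: "ratio_e 0 d = 0"
  unfolding ratio_e_def by auto

lemma ratio_e_le:
  assumes "0 \<le> c" "0 \<le> n" "0 \<le> d" "n \<le> c * d"
  shows "ratio_e n d \<le> ereal c"
proof (cases "d = 0")
  case False
  then have "n / d \<le> c" using assms by (simp add: divide_le_eq)
  then show ?thesis using False by (simp add: ratio_e_def)
qed (use assms in \<open>auto simp: ratio_e_def\<close>)

lemma cond_pmf_snd_eq_prior:
  assumes pmf_J: "\<And>v. pmf J (v, x) = (if v \<in> {0, 1} then c else 0) / 2" and c: "c > 0"
  shows "map_pmf fst (cond_pmf J {y. snd y = x}) = prior"
proof -
  define A where "A = {y :: real \<times> 'a. snd y = x}"
  have "pmf J (0, x) > 0" using pmf_J[of 0] c by simp
  then have "(0, x) \<in> set_pmf J \<inter> A" unfolding A_def by (simp add: set_pmf_iff)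
  then have ne: "set_pmf J \<inter> A \<noteq> {}" by blast
  have "(v, x) \<in> set_pmf J \<Longrightarrow> v \<in> {0, 1}" for v
    using pmf_J[of v] by (auto simp: set_pmf_iff split: if_splits)
  then have "A \<inter> set_pmf J = {(0, x), (1, x)} \<inter> set_pmf J" unfolding A_def by force
  then have "measure_pmf.prob J A = measure_pmf.prob J {(0, x), (1, x)}"
    by (metis measure_Int_set_pmf)
  also have "\<dots> = c" using pmf_J[of 0] pmf_J[of 1] by (simp add: measure_measure_pmf_finite)
  finally have mA: "measure_pmf.prob J A = c" .
  have "cond_pmf J A = map_pmf (\<lambda>v. (v, x)) prior"
  proof (rule pmf_eqI)
    fix y :: "real \<times> 'a"
    obtain v x' where y: "y = (v, x')" by (cases y) auto
    show "pmf (cond_pmf J A) y = pmf (map_pmf (\<lambda>v. (v, x)) prior) y"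
    proof (cases "x' = x")
      case True
      have "pmf (map_pmf (\<lambda>v. (v, x)) prior) (v, x) = pmf prior v"
        by (rule pmf_map_inj') (auto simp: inj_def)
      moreover have "pmf (cond_pmf J A) (v, x) = pmf J (v, x) / c"
        using pmf_cond[OF ne] mA unfolding A_def by simp
      ultimately show ?thesis using True y pmf_J[of v] c by (auto simp: indicator_def)
    next
      case False
      then have "y \<notin> set_pmf (map_pmf (\<lambda>v. (v, x)) prior)" using y by auto
      then show ?thesis using False y pmf_cond[OF ne] unfolding A_def by (simp add: set_pmf_eq)
    qed
  qed
  then show ?thesis unfolding A_def by (simp add: map_pmf_comp)
qed

lemma ids_ratio_return_pmf:
  "ids_ratio \<tau> r (return_pmf w) s \<nu>
     = ratio_e ((measure_pmf.expectation \<nu> (\<lambda>a. Vstar \<tau> r w s - Qstar \<tau> r w s a))\<^sup>2) 0"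
proof -
  have "bind_pmf (return_pmf w) (\<lambda>v. map_pmf (\<lambda>a. (pistar \<tau> r v s, (a, Qstar \<tau> r v s a))) \<nu>)
      = map_pmf (\<lambda>z. (pistar \<tau> r w s, z)) (map_pmf (\<lambda>a. (a, Qstar \<tau> r w s a)) \<nu>)"
    by (simp add: bind_return_pmf map_pmf_comp)
  then show ?thesis unfolding ids_ratio_def by (simp add: pair_return_pmf1 mutinf2_const_fst)
qed

section \<open>Trajectories of the agent\<close>

lemma obs_next_Pos_cases:
  assumes "\<tau> \<ge> 2" "n \<le> 2 * \<tau> - 2"
  shows "(n = \<tau> - 1 \<and> obs_next \<tau> v (Pos n) a = Rev v)
       \<or> (n \<noteq> \<tau> - 1 \<and> (\<exists>m \<le> 2 * \<tau> - 2. obs_next \<tau> v (Pos n) a = Pos m))"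
  using assms unfolding obs_next_def by auto

lemma obs_next_Rev: "\<tau> \<ge> 2 \<Longrightarrow> \<exists>m \<le> 2 * \<tau> - 2. obs_next \<tau> v (Rev w) a = Pos m"
  unfolding obs_next_def by auto

lemma obs_next_Pos_param:
  "n \<le> 2 * \<tau> - 2 \<Longrightarrow>
     obs_next \<tau> v (Pos n) a = (case obs_next \<tau> 0 (Pos n) a of Rev _ \<Rightarrow> Rev v | Pos m \<Rightarrow> Pos m)"
  unfolding obs_next_def by auto

definition blind_view :: "real \<times> obs \<times> real option \<Rightarrow> obs option" where
  "blind_view x = (case x of (v, ob, p) \<Rightarrow> if p = None then Some ob else None)"

locale value_ids_chain =
  fixes \<tau> :: nat and r :: "nat \<Rightarrow> real" and sel :: "nat \<Rightarrow> nat \<times> real option \<Rightarrow> nat pmf"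
  assumes tau_ge_2: "\<tau> \<ge> 2"
    and rewards: "\<forall>k < \<tau> - 1. 0 \<le> r k \<and> r k < 1"
    and value_ids: "is_value_ids \<tau> r sel"
begin

definition agent_step :: "nat \<Rightarrow> real \<times> obs \<times> real option \<Rightarrow> (real \<times> obs \<times> real option) pmf" where
  "agent_step t = (\<lambda>(v, ob, p). map_pmf
     (\<lambda>a. let ob' = obs_next \<tau> v ob a in (v, ob', (case ob' of Rev w \<Rightarrow> Some w | Pos _ \<Rightarrow> p)))
     (sel t (st ob, p)))"

primrec proc_given :: "nat \<Rightarrow> real \<Rightarrow> (real \<times> obs \<times> real option) pmf" where
  "proc_given 0 v = return_pmf (v, Pos 0, None)"
| "proc_given (Suc t) v = bind_pmf (proc_given t v) (agent_step t)"

lemma proc_eq_bind_prior: "proc \<tau> sel t = bind_pmf prior (proc_given t)"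
proof (induction t)
  case 0
  then show ?case by (simp add: map_pmf_def)
next
  case (Suc t)
  have "proc \<tau> sel (Suc t) = bind_pmf (proc \<tau> sel t) (agent_step t)"
    by (simp add: agent_step_def)
  then show ?case by (simp only: Suc proc_given.simps bind_assoc_pmf)
qed

text \<open>The observations of an agent that has not yet seen \<open>r\<^sub>\<tau>\<^sub>-\<^sub>1\<close>, and \<^term>\<open>None\<close> from
  the reveal on. This process does not depend on \<open>r\<^sub>\<tau>\<^sub>-\<^sub>1\<close>, which is why the parameter of
  \<^const>\<open>obs_next\<close> is set to an arbitrary value.\<close>

definition blind_step :: "nat \<Rightarrow> obs option \<Rightarrow> obs option pmf" where
  "blind_step t z = (case z of
       None \<Rightarrow> return_pmf None
     | Some ob \<Rightarrow> map_pmf (\<lambda>a. case obs_next \<tau> 0 ob a of Rev _ \<Rightarrow> None | Pos n \<Rightarrow> Some (Pos n))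
                   (sel t (st ob, None)))"

primrec blind_proc :: "nat \<Rightarrow> obs option pmf" where
  "blind_proc 0 = return_pmf (Some (Pos 0))"
| "blind_proc (Suc t) = bind_pmf (blind_proc t) (blind_step t)"

definition consistent :: "real \<Rightarrow> real \<times> obs \<times> real option \<Rightarrow> bool" where
  "consistent v x = (case x of (v', ob, p) \<Rightarrow> v' = v \<and> (p = None \<or> p = Some v) \<and>
       ((\<exists>n \<le> 2 * \<tau> - 2. ob = Pos n) \<or> (p = Some v \<and> ob = Rev v)))"

lemma set_pmf_proc: "set_pmf (proc \<tau> sel t) = set_pmf (proc_given t 0) \<union> set_pmf (proc_given t 1)"
  by (auto simp: proc_eq_bind_prior)

lemma value_ids_at:
  assumes "x \<in> snd ` set_pmf (agent_joint \<tau> sel t)"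
  shows "action_dist (sel t x)"
    "action_dist \<nu> \<Longrightarrow> ids_ratio \<tau> r (posterior \<tau> sel t x) (fst x) (sel t x)
                          \<le> ids_ratio \<tau> r (posterior \<tau> sel t x) (fst x) \<nu>"
  using value_ids assms unfolding is_value_ids_def by blast+

lemma agent_state_reachable:
  "(v, ob, p) \<in> set_pmf (proc \<tau> sel t) \<Longrightarrow> (st ob, p) \<in> snd ` set_pmf (agent_joint \<tau> sel t)"
  unfolding agent_joint_def by force

lemma proc_given_subset_proc: "v \<in> {0, 1} \<Longrightarrow> set_pmf (proc_given t v) \<subseteq> set_pmf (proc \<tau> sel t)"
  using set_pmf_proc by auto

lemma action_dist_proc: "(v, ob, p) \<in> set_pmf (proc \<tau> sel t) \<Longrightarrow> action_dist (sel t (st ob, p))"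
  using agent_state_reachable value_ids_at(1) by blast

lemma proc_given_consistent: "v \<in> {0, 1} \<Longrightarrow> x \<in> set_pmf (proc_given t v) \<Longrightarrow> consistent v x"
proof (induction t arbitrary: x)
  case 0
  then show ?case by (auto simp: consistent_def)
next
  case (Suc t)
  then obtain y where y: "y \<in> set_pmf (proc_given t v)" "x \<in> set_pmf (agent_step t y)" by auto
  obtain v' ob p where yy: "y = (v', ob, p)" by (cases y) auto
  have cy: "consistent v y" using Suc y by auto
  then have "v' = v" using yy by (simp add: consistent_def)
  with y(2) obtain a where x: "x = (v, obs_next \<tau> v ob a,
      (case obs_next \<tau> v ob a of Rev w \<Rightarrow> Some w | Pos _ \<Rightarrow> p))"
    unfolding agent_step_def yy by (auto simp: Let_def)
  show ?case
  proof (cases ob)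
    case (Rev w)
    then have "p = Some v" using cy yy by (auto simp: consistent_def)
    then show ?thesis using obs_next_Rev[OF tau_ge_2, of v w a] x Rev by (auto simp: consistent_def)
  next
    case (Pos n)
    then have n: "n \<le> 2 * \<tau> - 2" "p = None \<or> p = Some v" using cy yy by (auto simp: consistent_def)
    show ?thesis
      using obs_next_Pos_cases[OF tau_ge_2 n(1), of v a] x Pos n(2) by (auto simp: consistent_def)
  qed
qed

lemma blind_view_agent_step:
  assumes "consistent v x"
  shows "map_pmf blind_view (agent_step t x) = blind_step t (blind_view x)"
proof -
  obtain v' ob p where xx: "x = (v', ob, p)" by (cases x) auto
  show ?thesis
  proof (cases "p = None")
    case False
    then have p: "p = Some v" using assms xx by (auto simp: consistent_def)
    have "map_pmf blind_view (agent_step t x) = map_pmf (\<lambda>_. None) (sel t (st ob, p))"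
      unfolding xx agent_step_def blind_view_def using p
      by (auto simp: map_pmf_comp Let_def simp del: map_pmf_const intro!: map_pmf_cong
          split: obs.split)
    then show ?thesis using p unfolding xx blind_view_def blind_step_def by simp
  next
    case True
    then obtain n where n: "ob = Pos n" "n \<le> 2 * \<tau> - 2"
      using assms xx by (auto simp: consistent_def)
    show ?thesis unfolding xx agent_step_def blind_view_def blind_step_def using True n
      by (auto simp: map_pmf_comp Let_def obs_next_Pos_param[OF n(2), where v = v']
          intro!: map_pmf_cong split: obs.split)
  qed
qed

lemma map_blind_view_proc_given:
  "v \<in> {0, 1} \<Longrightarrow> map_pmf blind_view (proc_given t v) = blind_proc t"
proof (induction t)
  case 0
  then show ?case by (simp add: blind_view_def)
next
  case (Suc t)
  have "map_pmf blind_view (proc_given (Suc t) v)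
      = bind_pmf (proc_given t v) (\<lambda>x. map_pmf blind_view (agent_step t x))"
    by (simp add: map_bind_pmf)
  also have "\<dots> = bind_pmf (proc_given t v) (\<lambda>x. blind_step t (blind_view x))"
    using proc_given_consistent[OF Suc.prems]
    by (intro bind_pmf_cong[OF refl] blind_view_agent_step) auto
  also have "\<dots> = bind_pmf (map_pmf blind_view (proc_given t v)) (blind_step t)"
    by (simp add: bind_map_pmf)
  finally show ?case using Suc by simp
qed

lemma set_pmf_proc_given_subset:
  "v \<in> {0, 1} \<Longrightarrow>
     set_pmf (proc_given t v) \<subseteq> {v} \<times> (Pos ` {..2 * \<tau> - 2} \<union> {Rev v}) \<times> {None, Some v}"
proof
  fix x assume v: "v \<in> {0, 1}" and x: "x \<in> set_pmf (proc_given t v)"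
  obtain v' ob p where xx: "x = (v', ob, p)" by (cases x) auto
  have "consistent v x" using proc_given_consistent[OF v x] .
  then show "x \<in> {v} \<times> (Pos ` {..2 * \<tau> - 2} \<union> {Rev v}) \<times> {None, Some v}"
    unfolding xx consistent_def by auto
qed

lemma finite_set_pmf_proc_given: "v \<in> {0, 1} \<Longrightarrow> finite (set_pmf (proc_given t v))"
  by (rule finite_subset[OF set_pmf_proc_given_subset]) auto

lemma finite_set_pmf_proc: "finite (set_pmf (proc \<tau> sel t))"
  using finite_set_pmf_proc_given[of 0 t] finite_set_pmf_proc_given[of 1 t] by (simp add: set_pmf_proc)

lemma set_pmf_blind_proc: "v \<in> {0, 1} \<Longrightarrow> set_pmf (blind_proc t) = blind_view ` set_pmf (proc_given t v)"
  using map_blind_view_proc_given[of v t, symmetric] by simp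

lemma finite_set_pmf_blind_proc: "finite (set_pmf (blind_proc t))"
  using set_pmf_blind_proc[of 0 t] finite_set_pmf_proc_given[of 0 t] by simp

lemma set_pmf_blind_proc_cases:
  "z \<in> set_pmf (blind_proc t) \<Longrightarrow> z = None \<or> (\<exists>n \<le> 2 * \<tau> - 2. z = Some (Pos n))"
proof -
  assume "z \<in> set_pmf (blind_proc t)"
  then obtain x where x: "x \<in> set_pmf (proc_given t 0)" "z = blind_view x"
    using set_pmf_blind_proc[of 0 t] by auto
  obtain v' ob p where xx: "x = (v', ob, p)" by (cases x) auto
  have "consistent 0 x" using proc_given_consistent x by simp
  then show ?thesis using xx x by (auto simp: consistent_def blind_view_def)
qed

lemma unrevealed_in_proc_given:
  assumes "Some ob \<in> set_pmf (blind_proc t)" "v \<in> {0, 1}"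
  shows "(v, ob, None) \<in> set_pmf (proc_given t v)"
proof -
  obtain x where "x \<in> set_pmf (proc_given t v)" "blind_view x = Some ob"
    using assms set_pmf_blind_proc[OF assms(2), of t] by auto
  moreover from this have "consistent v x" using proc_given_consistent[OF assms(2)] by blast
  ultimately show ?thesis by (auto simp: consistent_def blind_view_def split: if_splits)
qed

lemma unrevealed_reachable:
  "Some ob \<in> set_pmf (blind_proc t) \<Longrightarrow> (st ob, None) \<in> snd ` set_pmf (agent_joint \<tau> sel t)"
  using unrevealed_in_proc_given[of ob t 0] proc_given_subset_proc[of 0 t]
  by (intro agent_state_reachable) auto

lemma action_dist_unrevealed:
  "Some ob \<in> set_pmf (blind_proc t) \<Longrightarrow> action_dist (sel t (st ob, None))"
  using unrevealed_reachable value_ids_at(1) by blast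

lemma map_proc_through_blind_view:
  assumes "\<And>v x. v \<in> {0, 1} \<Longrightarrow> consistent v x \<Longrightarrow> g x = h v (blind_view x)"
  shows "map_pmf g (proc \<tau> sel t) = bind_pmf prior (\<lambda>v. map_pmf (h v) (blind_proc t))"
proof -
  have "map_pmf g (proc_given t v) = map_pmf (h v) (blind_proc t)" if "v \<in> set_pmf prior" for v
  proof -
    have v: "v \<in> {0, 1}" using that by simp
    have "map_pmf g (proc_given t v) = map_pmf (\<lambda>x. h v (blind_view x)) (proc_given t v)"
      using assms[OF v] proc_given_consistent[OF v] by (intro map_pmf_cong) auto
    then show ?thesis by (simp add: map_blind_view_proc_given[OF v, symmetric] map_pmf_comp)
  qed
  then show ?thesis unfolding proc_eq_bind_prior map_bind_pmf by (rule bind_pmf_cong[OF refl])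
qed

lemma pmf_agent_joint_unrevealed:
  "pmf (agent_joint \<tau> sel t) (v, (n, None))
     = (if v \<in> {0, 1} then pmf (map_pmf (map_option st) (blind_proc t)) (Some n) else 0) / 2"
proof -
  let ?k = "\<lambda>(v :: real, (s :: nat, p :: real option)). (v, if p = None then Some s else None)"
  have "?k -` {(v, Some n)} = {(v, (n, None))}" by (auto split: if_splits)
  then have "pmf (agent_joint \<tau> sel t) (v, (n, None)) = pmf (map_pmf ?k (agent_joint \<tau> sel t)) (v, Some n)"
    by (simp add: pmf_map measure_pmf_single)
  also have "map_pmf ?k (agent_joint \<tau> sel t)
      = bind_pmf prior (\<lambda>v. map_pmf (\<lambda>z. (v, map_option st z)) (blind_proc t))"
    unfolding agent_joint_def map_pmf_comp
    by (rule map_proc_through_blind_view) (auto simp: consistent_def blind_view_def)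
  finally show ?thesis by (simp add: pmf_bind_prior pmf_pair_const_fst)
qed

lemma agent_joint_revealed: "(v, (n, Some w)) \<in> set_pmf (agent_joint \<tau> sel t) \<Longrightarrow> v = w"
  unfolding agent_joint_def set_map_pmf set_pmf_proc
  using proc_given_consistent by (fastforce simp: consistent_def)

lemma posterior_unrevealed:
  assumes "Some ob \<in> set_pmf (blind_proc t)"
  shows "posterior \<tau> sel t (st ob, None) = prior"
  unfolding posterior_def
proof (rule cond_pmf_snd_eq_prior)
  show "pmf (agent_joint \<tau> sel t) (v, st ob, None)
      = (if v \<in> {0, 1} then pmf (map_pmf (map_option st) (blind_proc t)) (Some (st ob)) else 0) / 2" for v
    by (rule pmf_agent_joint_unrevealed)
  have "Some (st ob) \<in> set_pmf (map_pmf (map_option st) (blind_proc t))" using assms by force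
  then show "pmf (map_pmf (map_option st) (blind_proc t)) (Some (st ob)) > 0"
    by (simp add: pmf_positive)
qed

lemma posterior_revealed:
  assumes "(n, Some w) \<in> snd ` set_pmf (agent_joint \<tau> sel t)"
  shows "posterior \<tau> sel t (n, Some w) = return_pmf w"
proof -
  define A where "A = {y :: real \<times> nat \<times> real option. snd y = (n, Some w)}"
  have ne: "set_pmf (agent_joint \<tau> sel t) \<inter> A \<noteq> {}" using assms unfolding A_def by force
  have "set_pmf (cond_pmf (agent_joint \<tau> sel t) A) \<subseteq> {(w, (n, Some w))}"
    using set_cond_pmf[OF ne] agent_joint_revealed unfolding A_def by force
  then have "cond_pmf (agent_joint \<tau> sel t) A = return_pmf (w, (n, Some w))"
    by (simp add: set_pmf_subset_singleton)
  then show ?thesis unfolding posterior_def A_def[symmetric] by simp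
qed

lemma revealed_regret_eq_0:
  assumes x: "(s, Some w) \<in> snd ` set_pmf (agent_joint \<tau> sel t)"
  shows "measure_pmf.expectation (sel t (s, Some w)) (\<lambda>a. Vstar \<tau> r w s - Qstar \<tau> r w s a) = 0"
proof -
  have "action_dist (return_pmf (pistar \<tau> r w s))"
    using pistar_action[of \<tau> r w s] by (auto simp: action_dist_def)
  then have "ids_ratio \<tau> r (return_pmf w) s (sel t (s, Some w))
      \<le> ids_ratio \<tau> r (return_pmf w) s (return_pmf (pistar \<tau> r w s))"
    using value_ids_at(2)[OF x] posterior_revealed[OF x] by simp
  also have "\<dots> = 0" unfolding ids_ratio_return_pmf by (simp add: Qstar_pistar ratio_e_zero_left)
  finally show ?thesis unfolding ids_ratio_return_pmf ratio_e_le_0_iff by simp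
qed

lemma exit_bounds:
  "s \<le> \<tau> - 2 \<Longrightarrow> 0 \<le> r s \<and> r s < 1 \<and> 0 \<le> best_exit \<tau> r (s + 1) \<and> best_exit \<tau> r (s + 1) < 1"
  using rewards tau_ge_2 best_exit_bounds[OF rewards, of "s + 1"] by (auto dest: spec[of _ s])

lemma Qstar_Vstar_top_row:
  assumes s: "s \<le> \<tau> - 2"
  shows "Qstar \<tau> r v s 0 = r s" "Qstar \<tau> r 1 s 1 = 1" "Qstar \<tau> r 0 s 1 = best_exit \<tau> r (s + 1)"
    "Vstar \<tau> r 1 s = 1" "Vstar \<tau> r 0 s = max (r s) (best_exit \<tau> r (s + 1))"
proof -
  show "Qstar \<tau> r v s 0 = r s" using Qstar_exit[OF tau_ge_2 s] .
  have "s + 1 \<le> \<tau> - 1" "s \<le> \<tau> - 1" "s < \<tau> - 1" using s tau_ge_2 by auto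
  then show "Qstar \<tau> r 1 s 1 = 1" "Qstar \<tau> r 0 s 1 = best_exit \<tau> r (s + 1)"
    "Vstar \<tau> r 1 s = 1" "Vstar \<tau> r 0 s = max (r s) (best_exit \<tau> r (s + 1))"
    using Qstar_advance[OF tau_ge_2 s] Vstar_top_row[OF tau_ge_2 rewards] best_exit_step by auto
qed

lemma pistar_exit_worthy:
  assumes "s \<le> \<tau> - 2" "best_exit \<tau> r (s + 1) \<le> r s"
  shows "pistar \<tau> r 0 s = 0" "pistar \<tau> r 1 s = 1"
  using Qstar_Vstar_top_row[OF assms(1)] assms(2) exit_bounds[OF assms(1)]
  unfolding pistar_def by auto

lemma pistar_dominated:
  assumes "s \<le> \<tau> - 2" "r s < best_exit \<tau> r (s + 1)"
  shows "pistar \<tau> r 0 s = 1" "pistar \<tau> r 1 s = 1"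
  using Qstar_Vstar_top_row[OF assms(1)] assms(2) exit_bounds[OF assms(1)]
  unfolding pistar_def by auto

lemma expected_regret_prior:
  assumes "s \<le> \<tau> - 2" "action_dist \<nu>"
  shows "measure_pmf.expectation (pair_pmf prior \<nu>) (\<lambda>(v, a). Vstar \<tau> r v s - Qstar \<tau> r v s a)
    = (if best_exit \<tau> r (s + 1) \<le> r s then ids_regret (r s) (best_exit \<tau> r (s + 1)) (pmf \<nu> 1)
       else (1 - pmf \<nu> 1) * (1 - 2 * r s + best_exit \<tau> r (s + 1)) / 2)"
  using Qstar_Vstar_top_row[OF assms(1)]
  unfolding expectation_pair_prior_action[OF assms(2)] ids_regret_def by (auto simp: max_def field_simps)

lemma info_gain_prior_dominated:
  assumes "s \<le> \<tau> - 2" "r s < best_exit \<tau> r (s + 1)"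
  shows "mutinf2 (bind_pmf prior (\<lambda>v. map_pmf (\<lambda>a. (pistar \<tau> r v s, (a, Qstar \<tau> r v s a))) \<nu>)) = 0"
proof -
  have "bind_pmf prior (\<lambda>v. map_pmf (\<lambda>a. (pistar \<tau> r v s, (a, Qstar \<tau> r v s a))) \<nu>)
      = bind_pmf prior (\<lambda>v. map_pmf (\<lambda>z. (1, z)) (map_pmf (\<lambda>a. (a, Qstar \<tau> r v s a)) \<nu>))"
    using pistar_dominated[OF assms] by (auto simp: map_pmf_comp intro!: bind_pmf_cong)
  also have "\<dots> = map_pmf (\<lambda>z. (1, z)) (bind_pmf prior (\<lambda>v. map_pmf (\<lambda>a. (a, Qstar \<tau> r v s a)) \<nu>))"
    by (simp add: map_bind_pmf)
  finally show ?thesis by (simp only: mutinf2_const_fst)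
qed

text \<open>In an exit-worthy state the agent learns \<open>\<pi>\<^sub>*\<close> exactly when it continues, since
  continuing reveals whether \<open>Q\<^sub>*(s,1)\<close> is \<open>1\<close> or \<open>best_exit\<close>.\<close>

lemma info_gain_prior_exit_worthy:
  assumes s: "s \<le> \<tau> - 2" and worthy: "best_exit \<tau> r (s + 1) \<le> r s" and \<nu>: "action_dist \<nu>"
  shows "mutinf2 (bind_pmf prior (\<lambda>v. map_pmf (\<lambda>a. (pistar \<tau> r v s, (a, Qstar \<tau> r v s a))) \<nu>))
           = pmf \<nu> 1"
proof -
  define x where "x = r s"
  define y where "y = best_exit \<tau> r (s + 1)"
  define q where "q = pmf \<nu> 1"
  define h where "h v a = (if v = 0 then (0 :: nat, (a, if a = 0 then x else y))
                                    else (1, (a, if a = 0 then x else 1)))" for v :: real and a :: nat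
  have y: "y \<noteq> 1" using exit_bounds[OF s] y_def by auto
  define J where "J = bind_pmf prior (\<lambda>v. map_pmf (h v) \<nu>)"
  have "bind_pmf prior (\<lambda>v. map_pmf (\<lambda>a. (pistar \<tau> r v s, (a, Qstar \<tau> r v s a))) \<nu>) = J"
    unfolding J_def
  proof (intro bind_pmf_cong[OF refl] map_pmf_cong[OF refl])
    fix v a assume "v \<in> set_pmf prior" "a \<in> set_pmf \<nu>"
    then have "v = 0 \<or> v = 1" "a = 0 \<or> a = 1" using \<nu> by (auto simp: action_dist_def)
    then show "(pistar \<tau> r v s, (a, Qstar \<tau> r v s a)) = h v a"
      using pistar_exit_worthy[OF s worthy] Qstar_Vstar_top_row[OF s] unfolding h_def x_def y_def by auto
  qed
  moreover have "mutinf2 J = q"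
  proof (rule mutinf2_erasure_channel)
    show "set_pmf J \<subseteq> {(0, (0, x)), (1, (0, x)), (0, (1, y)), (1, (1, 1))}"
      using \<nu> unfolding J_def h_def action_dist_def by auto
    have "pmf J z = (pmf (map_pmf (h 0) \<nu>) z + pmf (map_pmf (h 1) \<nu>) z) / 2" for z
      unfolding J_def by (rule pmf_bind_prior)
    then show "pmf J (0, (0, x)) = (1 - q) / 2" "pmf J (1, (0, x)) = (1 - q) / 2"
      "pmf J (0, (1, y)) = q / 2" "pmf J (1, (1, 1)) = q / 2"
      using y unfolding pmf_map_action[OF \<nu>] q_def by (simp_all add: h_def)
  qed (use y in auto)
  ultimately show ?thesis unfolding q_def by simp
qed

definition blind_regret :: "nat \<Rightarrow> nat \<Rightarrow> real" where
  "blind_regret t s = measure_pmf.expectation (pair_pmf prior (sel t (s, None)))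
     (\<lambda>(v, a). Vstar \<tau> r v s - Qstar \<tau> r v s a)"

lemma blind_regret_off_top:
  assumes "\<tau> - 1 \<le> s"
  shows "blind_regret t s = 0"
proof -
  have "(\<lambda>(v, a). Vstar \<tau> r v s - Qstar \<tau> r v s a) = (\<lambda>_. 0 :: real)"
    using Qstar_eq_Vstar_off_top[OF tau_ge_2 assms] by auto
  then show ?thesis unfolding blind_regret_def by simp
qed

lemma ids_ratio_prior:
  assumes "s \<le> \<tau> - 2" "action_dist \<nu>"
  shows "ids_ratio \<tau> r prior s \<nu> = (if best_exit \<tau> r (s + 1) \<le> r s
     then ratio_e ((ids_regret (r s) (best_exit \<tau> r (s + 1)) (pmf \<nu> 1))\<^sup>2) (pmf \<nu> 1)
     else ratio_e (((1 - pmf \<nu> 1) * (1 - 2 * r s + best_exit \<tau> r (s + 1)) / 2)\<^sup>2) 0)"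
  unfolding ids_ratio_def expected_regret_prior[OF assms]
  using info_gain_prior_exit_worthy[OF assms(1) _ assms(2)] info_gain_prior_dominated[OF assms(1)]
  by auto

lemma value_ids_unrevealed:
  assumes "Some (Pos s) \<in> set_pmf (blind_proc t)"
  shows "action_dist (sel t (s, None))"
    "action_dist \<nu> \<Longrightarrow> ids_ratio \<tau> r prior s (sel t (s, None)) \<le> ids_ratio \<tau> r prior s \<nu>"
  using value_ids_at[OF unrevealed_reachable[OF assms]] posterior_unrevealed[OF assms]
  by (simp_all add: st_def)

lemma value_ids_exit_worthy:
  assumes s: "s \<le> \<tau> - 2" and ob: "Some (Pos s) \<in> set_pmf (blind_proc t)"
    and worthy: "best_exit \<tau> r (s + 1) \<le> r s"
  defines "x \<equiv> r s" and "y \<equiv> best_exit \<tau> r (s + 1)"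
  shows "pmf (sel t (s, None)) 1 = ids_prob x y" "blind_regret t s = ids_regret x y (ids_prob x y)"
proof -
  define q where "q = pmf (sel t (s, None)) 1"
  define p where "p = ids_prob x y"
  have b: "0 \<le> y" "y \<le> x" "x < 1" using exit_bounds[OF s] worthy x_def y_def by auto
  have p: "0 < p" "p \<le> 1" using ids_prob_bounds[OF b] p_def by auto
  define \<nu> where "\<nu> = map_pmf (\<lambda>b. if b then 1 else (0 :: nat)) (bernoulli_pmf p)"
  have \<nu>: "action_dist \<nu>" "pmf \<nu> 1 = p" using action_dist_bernoulli[of p] p unfolding \<nu>_def by auto
  have act: "action_dist (sel t (s, None))" by (rule value_ids_unrevealed(1)[OF ob])
  have "ratio_e ((ids_regret x y q)\<^sup>2) q = ids_ratio \<tau> r prior s (sel t (s, None))"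
    using ids_ratio_prior[OF s act] worthy unfolding x_def y_def q_def by simp
  also have "\<dots> \<le> ids_ratio \<tau> r prior s \<nu>" by (rule value_ids_unrevealed(2)[OF ob \<nu>(1)])
  also have "\<dots> = ereal ((ids_regret x y p)\<^sup>2 / p)"
    using ids_ratio_prior[OF s \<nu>(1)] worthy p unfolding x_def y_def \<nu>(2) ratio_e_def by simp
  finally have le: "ratio_e ((ids_regret x y q)\<^sup>2) q \<le> ereal ((ids_regret x y p)\<^sup>2 / p)" .
  have "q \<noteq> 0"
  proof
    assume "q = 0"
    moreover have "ids_regret x y 0 \<noteq> 0" using b unfolding ids_regret_def by simp
    ultimately show False using le unfolding ratio_e_def by simp
  qed
  then have "0 < q" "q \<le> 1" unfolding q_def by (auto simp: pmf_le_1 order.not_eq_order_implies_strict)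
  moreover have "(ids_regret x y q)\<^sup>2 / q \<le> (ids_regret x y p)\<^sup>2 / p"
    using le \<open>q \<noteq> 0\<close> unfolding ratio_e_def by simp
  ultimately have "q = p" unfolding p_def using ids_prob_unique_minimiser[OF b] by simp
  then show "pmf (sel t (s, None)) 1 = ids_prob x y" unfolding q_def p_def .
  show "blind_regret t s = ids_regret x y (ids_prob x y)"
    unfolding blind_regret_def expected_regret_prior[OF s act] using worthy \<open>q = p\<close>
    unfolding x_def y_def q_def p_def by simp
qed

lemma value_ids_dominated:
  assumes s: "s \<le> \<tau> - 2" and ob: "Some (Pos s) \<in> set_pmf (blind_proc t)"
    and dominated: "r s < best_exit \<tau> r (s + 1)"
  shows "pmf (sel t (s, None)) 1 = 1" "blind_regret t s = 0"
proof -
  define q where "q = pmf (sel t (s, None)) 1"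
  define c where "c = 1 - 2 * r s + best_exit \<tau> r (s + 1)"
  have "c > 0" using exit_bounds[OF s] dominated unfolding c_def by simp
  have act: "action_dist (sel t (s, None))" by (rule value_ids_unrevealed(1)[OF ob])
  have \<delta>: "action_dist (return_pmf 1)" by (simp add: action_dist_def)
  have "ratio_e (((1 - q) * c / 2)\<^sup>2) 0 = ids_ratio \<tau> r prior s (sel t (s, None))"
    using ids_ratio_prior[OF s act] dominated unfolding c_def q_def by simp
  also have "\<dots> \<le> ids_ratio \<tau> r prior s (return_pmf 1)" by (rule value_ids_unrevealed(2)[OF ob \<delta>])
  also have "\<dots> = 0" using ids_ratio_prior[OF s \<delta>] dominated by (simp add: ratio_e_zero_left)
  finally have "(1 - q) * c = 0" unfolding ratio_e_le_0_iff by simp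
  then show "pmf (sel t (s, None)) 1 = 1" using \<open>c > 0\<close> unfolding q_def by simp
  then show "blind_regret t s = 0"
    unfolding blind_regret_def expected_regret_prior[OF s act] using dominated by simp
qed

section \<open>Reaching the reveal\<close>

text \<open>\<^term>\<open>reach_prob t d\<close> is the probability that an unrevealed agent in state \<open>\<tau> - 1 - d\<close> at
  time \<open>t\<close> continues \<open>d\<close> times in a row and so reaches the reveal.\<close>

primrec reach_prob :: "nat \<Rightarrow> nat \<Rightarrow> real" where
  "reach_prob t 0 = 1"
| "reach_prob t (Suc d) = pmf (sel t (\<tau> - 2 - d, None)) 1 * reach_prob (Suc t) d"

lemma reach_prob_nonneg: "0 \<le> reach_prob t d"
  by (induction d arbitrary: t) auto

lemma reach_prob_step:
  assumes "s \<le> \<tau> - 2"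
  shows "reach_prob t (\<tau> - 1 - s) = pmf (sel t (s, None)) 1 * reach_prob (Suc t) (\<tau> - 1 - (s + 1))"
proof -
  have "\<tau> - 1 - s = Suc (\<tau> - 1 - (s + 1))" "\<tau> - 2 - (\<tau> - 1 - (s + 1)) = s"
    using assms tau_ge_2 by auto
  then show ?thesis by (simp only: reach_prob.simps)
qed

lemma blind_proc_continue:
  assumes "Some (Pos s) \<in> set_pmf (blind_proc t)" "s \<le> \<tau> - 2" "pmf (sel t (s, None)) 1 > 0"
  shows "Some (Pos (s + 1)) \<in> set_pmf (blind_proc (Suc t))"
proof -
  have "1 \<in> set_pmf (sel t (s, None))" using assms(3) by (simp add: set_pmf_iff)
  moreover have "obs_next \<tau> 0 (Pos s) 1 = Pos (s + 1)" using assms(2) tau_ge_2 by (auto simp: obs_next_def)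
  ultimately have "Some (Pos (s + 1)) \<in> set_pmf (blind_step t (Some (Pos s)))"
    unfolding blind_step_def by (force simp: st_def)
  then show ?thesis using assms(1) by auto
qed

lemma reach_lb_le_reach_prob:
  assumes "s \<le> \<tau> - 1" "Some (Pos s) \<in> set_pmf (blind_proc t)"
  shows "reach_lb (best_exit \<tau> r s) \<le> reach_prob t (\<tau> - 1 - s)"
  using assms
proof (induction "\<tau> - 1 - s" arbitrary: s t)
  case 0
  then show ?case by (simp add: best_exit_eq_0 reach_lb_def)
next
  case (Suc d)
  then have s: "s \<le> \<tau> - 2" "s < \<tau> - 1" by auto
  define q where "q = pmf (sel t (s, None)) 1"
  define x where "x = r s"
  define y where "y = best_exit \<tau> r (s + 1)"
  have IH: "reach_lb y \<le> reach_prob (Suc t) (\<tau> - 1 - (s + 1))" if "q > 0"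
    using Suc blind_proc_continue[OF Suc.prems(2) s(1)] that unfolding y_def q_def by force
  have reach: "reach_prob t (\<tau> - 1 - s) = q * reach_prob (Suc t) (\<tau> - 1 - (s + 1))"
    unfolding q_def by (rule reach_prob_step[OF s(1)])
  have b: "0 \<le> x" "x < 1" "0 \<le> y" "y < 1" using exit_bounds[OF s(1)] x_def y_def by auto
  have best: "best_exit \<tau> r s = max x y" using best_exit_step[OF s(2)] unfolding x_def y_def .
  show ?case
  proof (cases "y \<le> x")
    case True
    have q: "q = ids_prob x y" using value_ids_exit_worthy(1)[OF s(1) Suc.prems(2)] True
      unfolding q_def x_def y_def by simp
    have "0 < q" using ids_prob_bounds[of y x] b True q by simp
    have "reach_lb x \<le> q * reach_lb y" using reach_lb_le_ids_prob_mult[of y x] b True q by simp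
    also have "\<dots> \<le> q * reach_prob (Suc t) (\<tau> - 1 - (s + 1))"
      using IH \<open>0 < q\<close> by (intro mult_left_mono) auto
    finally show ?thesis using best True reach by (simp add: max_def)
  next
    case False
    have "q = 1" using value_ids_dominated(1)[OF s(1) Suc.prems(2)] False
      unfolding q_def x_def y_def by simp
    then show ?thesis using IH best False reach by (simp add: max_def)
  qed
qed

lemma blind_regret_sq_le_reach_prob:
  assumes "s \<le> \<tau> - 1" "Some (Pos s) \<in> set_pmf (blind_proc t)"
  shows "(blind_regret t s)\<^sup>2 \<le> reach_prob t (\<tau> - 1 - s) / 8"
proof (cases "s = \<tau> - 1")
  case True
  then show ?thesis using blind_regret_off_top[of s t] by simp
next
  case False
  then have s: "s \<le> \<tau> - 2" using assms(1) by simp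
  define q where "q = pmf (sel t (s, None)) 1"
  define x where "x = r s"
  define y where "y = best_exit \<tau> r (s + 1)"
  have reach: "reach_prob t (\<tau> - 1 - s) = q * reach_prob (Suc t) (\<tau> - 1 - (s + 1))"
    unfolding q_def by (rule reach_prob_step[OF s])
  show ?thesis
  proof (cases "y \<le> x")
    case True
    have b: "0 \<le> y" "y \<le> x" "x < 1" using exit_bounds[OF s] True x_def y_def by auto
    have q: "q = ids_prob x y" and regret: "blind_regret t s = ids_regret x y q"
      using value_ids_exit_worthy[OF s assms(2)] True unfolding q_def x_def y_def by simp_all
    have "0 < q" using ids_prob_bounds[OF b] q by simp
    have "Some (Pos (s + 1)) \<in> set_pmf (blind_proc (Suc t))"
      using blind_proc_continue[OF assms(2) s] \<open>0 < q\<close> unfolding q_def by simp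
    then have "reach_lb y \<le> reach_prob (Suc t) (\<tau> - 1 - (s + 1))"
      using reach_lb_le_reach_prob[of "s + 1"] s tau_ge_2 unfolding y_def by simp
    then have "q * reach_lb y / 8 \<le> q * reach_prob (Suc t) (\<tau> - 1 - (s + 1)) / 8"
      using \<open>0 < q\<close> by (intro divide_right_mono mult_left_mono) auto
    then show ?thesis using ids_regret_sq_le[OF b] q regret reach by simp
  next
    case False
    then show ?thesis using value_ids_dominated[OF s assms(2)] reach_prob_nonneg
      unfolding x_def y_def by simp
  qed
qed

text \<open>A lower bound on the probability that an agent in blind state \<open>z\<close> at time \<open>t\<close> has seen
  \<open>r\<^sub>\<tau>\<^sub>-\<^sub>1\<close> by time \<open>T\<close>: it counts only the path that continues straight to the reveal.\<close>

definition reveal_potential :: "nat \<Rightarrow> nat \<Rightarrow> obs option \<Rightarrow> real" where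
  "reveal_potential T t z = (case z of
       None \<Rightarrow> 1
     | Some (Pos s) \<Rightarrow> if s \<le> \<tau> - 1 \<and> t + (\<tau> - s) \<le> T then reach_prob t (\<tau> - 1 - s) else 0
     | Some (Rev _) \<Rightarrow> 0)"

lemma reveal_potential_nonneg: "0 \<le> reveal_potential T t z"
  unfolding reveal_potential_def using reach_prob_nonneg by (auto split: option.split obs.split)

lemma expectation_blind_step:
  assumes "action_dist (sel t (st ob, None))"
  shows "measure_pmf.expectation (blind_step t (Some ob)) f
    = (1 - pmf (sel t (st ob, None)) 1) * f (case obs_next \<tau> 0 ob 0 of Rev _ \<Rightarrow> None | Pos n \<Rightarrow> Some (Pos n))
      + pmf (sel t (st ob, None)) 1 * f (case obs_next \<tau> 0 ob 1 of Rev _ \<Rightarrow> None | Pos n \<Rightarrow> Some (Pos n))"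
  unfolding blind_step_def using expectation_action[OF assms] by simp

lemma reveal_potential_step:
  assumes "t < T" and z: "z \<in> set_pmf (blind_proc t)"
  shows "reveal_potential T t z \<le> measure_pmf.expectation (blind_step t z) (reveal_potential T (Suc t))"
proof (cases z)
  case None
  then show ?thesis by (simp add: blind_step_def reveal_potential_def)
next
  case (Some ob)
  then obtain s where s: "ob = Pos s" using set_pmf_blind_proc_cases[OF z] by auto
  define q where "q = pmf (sel t (s, None)) 1"
  define \<Psi> where "\<Psi> = reveal_potential T (Suc t)"
  define g where "g a = (case obs_next \<tau> 0 (Pos s) a of Rev _ \<Rightarrow> None | Pos n \<Rightarrow> Some (Pos n))" for a
  have "action_dist (sel t (s, None))" using action_dist_unrevealed z Some s by (force simp: st_def)
  then have E: "measure_pmf.expectation (blind_step t z) \<Psi> = (1 - q) * \<Psi> (g 0) + q * \<Psi> (g 1)"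
    using expectation_blind_step[of t ob \<Psi>] Some s unfolding q_def g_def by (simp add: st_def)
  have q: "0 \<le> q" "q \<le> 1" unfolding q_def by (auto simp: pmf_le_1)
  then have E0: "0 \<le> (1 - q) * \<Psi> (g 0)" "0 \<le> q * \<Psi> (g 1)"
    unfolding \<Psi>_def using reveal_potential_nonneg by simp_all
  consider "\<not> (s \<le> \<tau> - 1 \<and> t + (\<tau> - s) \<le> T)" | "s = \<tau> - 1" | "s \<le> \<tau> - 2" "t + (\<tau> - s) \<le> T"
    by linarith
  then show ?thesis
  proof cases
    case 1
    then have "reveal_potential T t z = 0" using Some s by (auto simp: reveal_potential_def)
    then show ?thesis unfolding \<Psi>_def[symmetric] using E E0 by simp
  next
    case 2
    then have "g a = None" for a using tau_ge_2 by (auto simp: g_def obs_next_def)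
    then show ?thesis using E 2 \<open>t < T\<close> Some s unfolding \<Psi>_def by (simp add: reveal_potential_def)
  next
    case 3
    then have "g 1 = Some (Pos (s + 1))" using tau_ge_2 by (auto simp: g_def obs_next_def)
    moreover have "s + 1 \<le> \<tau> - 1" "Suc t + (\<tau> - (s + 1)) \<le> T" using 3 tau_ge_2 by auto
    ultimately have "\<Psi> (g 1) = reach_prob (Suc t) (\<tau> - 1 - (s + 1))"
      unfolding \<Psi>_def reveal_potential_def by simp
    then have "q * \<Psi> (g 1) = reach_prob t (\<tau> - 1 - s)"
      using reach_prob_step[OF 3(1), of t] unfolding q_def by simp
    moreover have "reveal_potential T t z = reach_prob t (\<tau> - 1 - s)"
      using 3 Some s by (simp add: reveal_potential_def)
    ultimately show ?thesis unfolding \<Psi>_def[symmetric] using E E0 by simp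
  qed
qed

lemma expectation_blind_proc_Suc:
  "measure_pmf.expectation (blind_proc (Suc t)) (f :: _ \<Rightarrow> real)
     = measure_pmf.expectation (blind_proc t) (\<lambda>z. measure_pmf.expectation (blind_step t z) f)"
proof -
  have "finite (set_pmf (blind_step t z))" if "z \<in> set_pmf (blind_proc t)" for z
    using action_dist_unrevealed[of _ t] finite_set_pmf_action that
    unfolding blind_step_def by (auto split: option.split)
  then show ?thesis by (simp only: blind_proc.simps expectation_bind_pmf_finite[OF finite_set_pmf_blind_proc])
qed

lemma expectation_reveal_potential_mono:
  "t + j \<le> T \<Longrightarrow> measure_pmf.expectation (blind_proc t) (reveal_potential T t)
     \<le> measure_pmf.expectation (blind_proc (t + j)) (reveal_potential T (t + j))"
proof (induction j)
  case (Suc j)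
  then have "measure_pmf.expectation (blind_proc t) (reveal_potential T t)
      \<le> measure_pmf.expectation (blind_proc (t + j)) (reveal_potential T (t + j))" by simp
  also have "\<dots> \<le> measure_pmf.expectation (blind_proc (t + j))
      (\<lambda>z. measure_pmf.expectation (blind_step (t + j) z) (reveal_potential T (Suc (t + j))))"
    using Suc.prems by (intro expectation_mono_finite[OF finite_set_pmf_blind_proc] reveal_potential_step) auto
  also have "\<dots> = measure_pmf.expectation (blind_proc (t + Suc j)) (reveal_potential T (t + Suc j))"
    using expectation_blind_proc_Suc[of "t + j" "reveal_potential T (Suc (t + j))"] by simp
  finally show ?case .
qed simp

definition reach_potential :: "nat \<Rightarrow> obs option \<Rightarrow> real" where
  "reach_potential t z = (case z of
       Some (Pos s) \<Rightarrow> if s \<le> \<tau> - 1 then reach_prob t (\<tau> - 1 - s) else 0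
     | _ \<Rightarrow> 0)"

lemma expectation_indicator_None:
  "measure_pmf.expectation p (\<lambda>z. if z = None then 1 else 0 :: real) = pmf p None"
  by (subst integral_measure_pmf_real[of "{None}"]) (auto split: if_splits)

lemma reveal_prob_increase:
  "pmf (blind_proc t) None + measure_pmf.expectation (blind_proc t) (reach_potential t)
     \<le> pmf (blind_proc (t + \<tau>)) None"
proof -
  have "reveal_potential (t + \<tau>) t = (\<lambda>z. (if z = None then 1 else 0) + reach_potential t z)"
    unfolding reveal_potential_def reach_potential_def by (auto split: option.split obs.split)
  then have "measure_pmf.expectation (blind_proc t) (reveal_potential (t + \<tau>) t)
      = pmf (blind_proc t) None + measure_pmf.expectation (blind_proc t) (reach_potential t)"
    by (simp add: expectation_add_finite[OF finite_set_pmf_blind_proc] expectation_indicator_None)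
  moreover have "reveal_potential (t + \<tau>) (t + \<tau>) = (\<lambda>z. if z = None then 1 else 0)"
    unfolding reveal_potential_def using tau_ge_2 by (intro ext) (auto split: option.split obs.split)
  then have "measure_pmf.expectation (blind_proc (t + \<tau>)) (reveal_potential (t + \<tau>) (t + \<tau>))
      = pmf (blind_proc (t + \<tau>)) None"
    by (simp add: expectation_indicator_None)
  ultimately show ?thesis using expectation_reveal_potential_mono[of t \<tau> "t + \<tau>"] by simp
qed

definition blind_regret_at :: "nat \<Rightarrow> obs option \<Rightarrow> real" where
  "blind_regret_at t z = (case z of Some ob \<Rightarrow> blind_regret t (st ob) | None \<Rightarrow> 0)"

lemma blind_regret_at_sq_le:
  assumes "z \<in> set_pmf (blind_proc t)"
  shows "(blind_regret_at t z)\<^sup>2 \<le> reach_potential t z / 8"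
proof (cases z)
  case (Some ob)
  then obtain s where s: "ob = Pos s" using set_pmf_blind_proc_cases[OF assms] by auto
  show ?thesis
  proof (cases "s \<le> \<tau> - 1")
    case True
    then show ?thesis using blind_regret_sq_le_reach_prob[of s t] assms Some s
      by (simp add: blind_regret_at_def reach_potential_def st_def)
  next
    case False
    then show ?thesis using blind_regret_off_top[of s t] Some s
      by (simp add: blind_regret_at_def reach_potential_def st_def)
  qed
qed (simp add: blind_regret_at_def reach_potential_def)

lemma sq_expected_blind_regret_le:
  "(measure_pmf.expectation (blind_proc t) (blind_regret_at t))\<^sup>2
     \<le> (pmf (blind_proc (t + \<tau>)) None - pmf (blind_proc t) None) / 8"
proof -
  have "(measure_pmf.expectation (blind_proc t) (blind_regret_at t))\<^sup>2
      \<le> measure_pmf.expectation (blind_proc t) (\<lambda>z. (blind_regret_at t z)\<^sup>2)"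
    by (rule square_expectation_le_finite[OF finite_set_pmf_blind_proc])
  also have "\<dots> \<le> measure_pmf.expectation (blind_proc t) (\<lambda>z. reach_potential t z / 8)"
    by (intro expectation_mono_finite[OF finite_set_pmf_blind_proc] blind_regret_at_sq_le)
  also have "\<dots> \<le> (pmf (blind_proc (t + \<tau>)) None - pmf (blind_proc t) None) / 8"
    using reveal_prob_increase[of t] by simp
  finally show ?thesis .
qed

section \<open>Regret and information gain\<close>

definition regret_at :: "nat \<Rightarrow> real \<times> obs \<times> real option \<Rightarrow> real" where
  "regret_at t x = (case x of (v, ob, p) \<Rightarrow>
     measure_pmf.expectation (sel t (st ob, p)) (\<lambda>a. Vstar \<tau> r v (st ob) - Qstar \<tau> r v (st ob) a))"

definition blind_regret_given :: "nat \<Rightarrow> real \<Rightarrow> obs option \<Rightarrow> real" where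
  "blind_regret_given t v z = (case z of
       None \<Rightarrow> 0
     | Some ob \<Rightarrow> measure_pmf.expectation (sel t (st ob, None))
                   (\<lambda>a. Vstar \<tau> r v (st ob) - Qstar \<tau> r v (st ob) a))"

lemma exp_regret_eq_expectation_proc:
  "exp_regret \<tau> r sel t = measure_pmf.expectation (proc \<tau> sel t) (regret_at t)"
proof -
  have "exp_regret \<tau> r sel t = measure_pmf.expectation (proc \<tau> sel t)
     (\<lambda>x. measure_pmf.expectation ((\<lambda>(v, ob, p). map_pmf (\<lambda>a. (v, st ob, a)) (sel t (st ob, p))) x)
          (\<lambda>(v, s, a). Vstar \<tau> r v s - Qstar \<tau> r v s a))"
    unfolding exp_regret_def
    using action_dist_proc finite_set_pmf_action
    by (intro expectation_bind_pmf_finite[OF finite_set_pmf_proc]) (auto split: prod.splits)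
  also have "\<dots> = measure_pmf.expectation (proc \<tau> sel t) (regret_at t)"
    unfolding regret_at_def by (intro expectation_cong_set_pmf) (auto split: prod.splits)
  finally show ?thesis .
qed

text \<open>Revealed states contribute nothing, because value-IDS then plays optimally.\<close>

lemma expectation_proc_given_regret_at:
  assumes v: "v \<in> {0, 1}"
  shows "measure_pmf.expectation (proc_given t v) (regret_at t)
           = measure_pmf.expectation (blind_proc t) (blind_regret_given t v)"
proof -
  have "measure_pmf.expectation (proc_given t v) (regret_at t)
      = measure_pmf.expectation (proc_given t v) (\<lambda>x. blind_regret_given t v (blind_view x))"
  proof (rule expectation_cong_set_pmf)
    fix x assume x: "x \<in> set_pmf (proc_given t v)"
    obtain v' ob p where xx: "x = (v', ob, p)" by (cases x) auto
    have c: "consistent v x" using proc_given_consistent[OF v x] .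
    show "regret_at t x = blind_regret_given t v (blind_view x)"
    proof (cases "p = None")
      case True
      then show ?thesis using c xx by (simp add: regret_at_def blind_regret_given_def blind_view_def consistent_def)
    next
      case False
      then have p: "p = Some v" "v' = v" using c xx by (auto simp: consistent_def)
      have "(st ob, Some v) \<in> snd ` set_pmf (agent_joint \<tau> sel t)"
        using agent_state_reachable proc_given_subset_proc[OF v] x xx p by blast
      then show ?thesis
        using revealed_regret_eq_0 xx p by (simp add: regret_at_def blind_regret_given_def blind_view_def)
    qed
  qed
  also have "\<dots> = measure_pmf.expectation (blind_proc t) (blind_regret_given t v)"
    using map_blind_view_proc_given[OF v] by (metis integral_map_pmf)
  finally show ?thesis .
qed

lemma blind_regret_eq_mean:
  assumes act: "action_dist (sel t (s, None))"
  shows "blind_regret t s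
    = (measure_pmf.expectation (sel t (s, None)) (\<lambda>a. Vstar \<tau> r 0 s - Qstar \<tau> r 0 s a)
       + measure_pmf.expectation (sel t (s, None)) (\<lambda>a. Vstar \<tau> r 1 s - Qstar \<tau> r 1 s a)) / 2"
  unfolding blind_regret_def expectation_pair_prior_action[OF act] expectation_action[OF act]
  by (simp add: field_simps)

lemma blind_regret_at_eq_mean:
  assumes "z \<in> set_pmf (blind_proc t)"
  shows "blind_regret_at t z = (blind_regret_given t 0 z + blind_regret_given t 1 z) / 2"
  using assms action_dist_unrevealed blind_regret_eq_mean
  by (cases z) (simp_all add: blind_regret_at_def blind_regret_given_def)

lemma exp_regret_eq_expectation_blind:
  "exp_regret \<tau> r sel t = measure_pmf.expectation (blind_proc t) (blind_regret_at t)"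
proof -
  have "exp_regret \<tau> r sel t = measure_pmf.expectation prior
      (\<lambda>v. measure_pmf.expectation (proc_given t v) (regret_at t))"
    unfolding exp_regret_eq_expectation_proc proc_eq_bind_prior
    by (rule expectation_bind_pmf_finite) (auto intro: finite_set_pmf_proc_given)
  also have "\<dots> = (measure_pmf.expectation (blind_proc t) (blind_regret_given t 0)
      + measure_pmf.expectation (blind_proc t) (blind_regret_given t 1)) / 2"
    by (simp add: expectation_prior expectation_proc_given_regret_at)
  also have "\<dots> = measure_pmf.expectation (blind_proc t)
      (\<lambda>z. (blind_regret_given t 0 z + blind_regret_given t 1 z) / 2)"
    by (simp add: expectation_add_finite[OF finite_set_pmf_blind_proc])
  also have "\<dots> = measure_pmf.expectation (blind_proc t) (blind_regret_at t)"
    by (intro expectation_cong_set_pmf) (simp add: blind_regret_at_eq_mean)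
  finally show ?thesis .
qed

lemma pistar_0_ne_pistar_1: "pistar \<tau> r 0 \<noteq> pistar \<tau> r 1"
proof -
  have s: "\<tau> - 2 \<le> \<tau> - 2" by simp
  have "best_exit \<tau> r (\<tau> - 2 + 1) = 0" using tau_ge_2 by (intro best_exit_eq_0) simp
  then have "best_exit \<tau> r (\<tau> - 2 + 1) \<le> r (\<tau> - 2)" using exit_bounds[OF s] by simp
  then have "pistar \<tau> r 0 (\<tau> - 2) \<noteq> pistar \<tau> r 1 (\<tau> - 2)" using pistar_exit_worthy[OF s] by simp
  then show ?thesis by metis
qed

lemma cond_ent_pistar_eq: "cond_ent_pistar \<tau> r sel t = 1 - pmf (blind_proc t) None"
proof -
  define w where "w = pmf (blind_proc t) None"
  define J where "J = bind_pmf prior (\<lambda>v. map_pmf (\<lambda>z. (v, if z = None then Some v else None)) (blind_proc t))"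
  have J: "map_pmf (\<lambda>(v, ob, p). (v, p)) (proc \<tau> sel t) = J"
    unfolding J_def by (rule map_proc_through_blind_view) (auto simp: consistent_def blind_view_def)
  have "map_pmf (\<lambda>(v, ob, p). (pistar \<tau> r v, p)) (proc \<tau> sel t) = map_pmf (\<lambda>(v, p). (pistar \<tau> r v, p)) J"
    "map_pmf (\<lambda>(v, ob, p). p) (proc \<tau> sel t) = map_pmf snd J"
    unfolding J[symmetric] map_pmf_comp by (auto intro: map_pmf_cong)
  moreover have "inj_on (\<lambda>(v, p). (pistar \<tau> r v, p)) (set_pmf J)"
    using pistar_0_ne_pistar_1 unfolding J_def by (auto simp: inj_on_def)
  ultimately have "cond_ent_pistar \<tau> r sel t = entropy2 J - entropy2 (map_pmf snd J)"
    unfolding cond_ent_pistar_def by (simp add: entropy2_map_inj)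
  also have "\<dots> = 1 - w"
  proof (rule entropy2_erasure_channel(2))
    show "set_pmf J \<subseteq> {(0, None), (1, None), (0, Some 0), (1, Some 1)}"
      unfolding J_def by (auto split: if_splits)
    have pJ: "pmf J (v, y) = (if y = Some v then w else if y = None then 1 - w else 0) / 2"
      if "v \<in> {0, 1}" for v y
      using that unfolding J_def pmf_bind_prior pmf_pair_const_fst pmf_map_if_None w_def by auto
    show "pmf J (0, None) = (1 - w) / 2" "pmf J (1, None) = (1 - w) / 2"
      "pmf J (0, Some 0) = w / 2" "pmf J (1, Some 1) = w / 2"
      using pJ[of 0 None] pJ[of 1 None] pJ[of 0 "Some 0"] pJ[of 1 "Some 1"] by simp_all
  qed auto
  finally show ?thesis unfolding w_def .
qed

lemma sq_exp_regret_le_info_gain: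
  "(exp_regret \<tau> r sel t)\<^sup>2 \<le> (cond_ent_pistar \<tau> r sel t - cond_ent_pistar \<tau> r sel (t + \<tau>)) / 8"
  using sq_expected_blind_regret_le[of t]
  by (simp add: exp_regret_eq_expectation_blind cond_ent_pistar_eq)

lemma Gamma_tau_le: "Gamma_tau \<tau> r sel t \<le> ereal (real \<tau> / 8)"
proof -
  define g where "g = cond_ent_pistar \<tau> r sel t - cond_ent_pistar \<tau> r sel (t + \<tau>)"
  have "(exp_regret \<tau> r sel t)\<^sup>2 \<le> g / 8" unfolding g_def by (rule sq_exp_regret_le_info_gain)
  moreover have "g / 8 = real \<tau> / 8 * (g / real \<tau>)" using tau_ge_2 by simp
  moreover have "0 \<le> g" using calculation(1) zero_le_power2[of "exp_regret \<tau> r sel t"] by linarith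
  ultimately show ?thesis unfolding Gamma_tau_def g_def[symmetric] by (intro ratio_e_le) auto
qed

lemma regret_le: "regret \<tau> r sel T \<le> 1/2 * sqrt (real \<tau> / 2 * real T)"
proof -
  define h where "h t = cond_ent_pistar \<tau> r sel t" for t
  have "h t \<in> {0..1}" for t unfolding h_def cond_ent_pistar_eq by (simp add: pmf_le_1)
  then have "(\<Sum>t<T. h t - h (t + \<tau>)) \<le> (\<Sum>j<\<tau>. 1)"
    unfolding sum_diff_shift by (intro sum_mono) (smt (verit) atLeastAtMost_iff)
  moreover have "(exp_regret \<tau> r sel t)\<^sup>2 \<le> 1/8 * (h t - h (t + \<tau>))" for t
    using sq_exp_regret_le_info_gain[of t] unfolding h_def by simp
  ultimately have "regret \<tau> r sel T \<le> sqrt (1/8 * real \<tau> * T)"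
    unfolding regret_def by (intro sum_le_sqrt_of_sq_le) auto
  also have "sqrt (1/8 * real \<tau> * T) = sqrt ((1/2)\<^sup>2 * (real \<tau> / 2 * real T))"
    by (simp add: power2_eq_square)
  also have "\<dots> = 1/2 * sqrt (real \<tau> / 2 * real T)" by (simp only: real_sqrt_mult real_sqrt_abs)
  finally show ?thesis .
qed

end

theorem mainTheorem11:
  fixes \<tau> :: nat and r :: "nat \<Rightarrow> real"
    and sel :: "nat \<Rightarrow> nat \<times> real option \<Rightarrow> nat pmf"
  assumes "\<tau> \<ge> 2"
    and "\<forall>k < \<tau> - 1. 0 \<le> r k \<and> r k < 1"
    and "is_value_ids \<tau> r sel"
  shows "(\<forall>t. Gamma_tau \<tau> r sel t \<le> ereal (real \<tau> / 8))
         \<and> (\<forall>T. regret \<tau> r sel T \<le> 1/2 * sqrt (real \<tau> / 2 * real T))"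
proof -
  interpret value_ids_chain \<tau> r sel using assms by unfold_locales
  show ?thesis using Gamma_tau_le regret_le by blast
qed

end
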